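(* For every (probabilistically) guarded nondeterministic expression $E$ there is a guarded standard equation system $\mathcal S$, all of whose free variables lie in the set of free variables of $E$, such that $E$ satisfies $\mathcal S$.
   Context: Fix a set $\mathsf{Act}$ of actions containing $\tau$ and a set $\mathsf{Var}$ of variables. Nondeterministic expressions: $E ::= 0 \mid X \mid \alpha.P \mid \mathrm{rec}\,X.E \mid E + E$; probabilistic expressions: $P ::= \partial(E) \mid P \oplus_p P$ ($0<p<1$); $\bigoplus_{k}p_kE_k$ is an iterated $\oplus$ of $\partial(E_k)$ giving $E_k$ probability $p_k$. Subdistributions, Dirac $\delta$, operational semantics: least relations with $\partial(E)\mapsto\delta_E$; $P\oplus_pQ\mapsto p\mu+(1-p)\nu$ if $P\mapsto\mu,Q\mapsto\nu$; $\alpha.P\xrightarrow{\alpha}\mu$ if $P\mapsto\mu$; $\mathrm{rec}\,X.E\xrightarrow{\alpha}\mu$ if $E[\mathrm{rec}\,X.E/X]\xrightarrow{\alpha}\mu$; $E+F\xrightarrow{\alpha}\mu$ and $F+E\xrightarrow{\alpha}\mu$ if $E\xrightarrow{\alpha}\mu$. Probabilistic unguardedness $E\rhd V$ is the least relation with: $X\rhd\{X\}$; $\tau.P\rhd V$ if $P\rhd V$; $\mathrm{rec}\,Y.E\rhd V\setminus\{Y\}$ if $E\rhd V$ and $V\ne\{Y\}$; $E+F\rhd V$ if $E\rhd V$; $E+F\rhd W$ if $F\rhd W$; $\partial(E)\rhd V$ if $E\rhd V$; $P\oplus_pQ\rhd V\cup W$ if $P\rhd V$, $Q\rhd W$. An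 expression is guarded if for every subterm $\mathrm{rec}\,X.F$, not $F\rhd\{X\}$. Provable equality $=$: least equivalence and congruence on expressions, allowing renaming of bound variables, containing all instances of the axiom schemes N1–N4, P1–P3, T1–T4, C, R1, R3–R6 and closed under R2, namely: $E+F=F+E$; $E+(F+G)=(E+F)+G$; $E+E=E$; $E+0=E$; $P\oplus_pQ=Q\oplus_{1-p}P$; $P\oplus_p(Q\oplus_{q/(1-p)}R)=(P\oplus_{p/(p+q)}Q)\oplus_{p+q}R$; $P\oplus_pP=P$; $\alpha.(\partial(\tau.\partial(E))\oplus_pP)=\alpha.(\partial(E)\oplus_pP)$; $\tau.\bigoplus_ip_i(E_i+F)+F=\tau.\bigoplus_ip_i(E_i+F)$; $\tau.\bigoplus_ip_i(E_i+\alpha.P_i)+\alpha.\bigoplus_ip_iP_i=\tau.\bigoplus_ip_i(E_i+\alpha.P_i)$; $\alpha.\bigoplus_ip_i(E_i+\tau.P_i)+\alpha.\bigoplus_ip_iP_i=\alpha.\bigoplus_ip_i(E_i+\tau.P_i)$; $\alpha.P+\alpha.Q=\alpha.P+\alpha.(P\oplus_pQ)+\alpha.Q$; $\mathrm{rec}\,X.E=E[\mathrm{rec}\,X.E/X]$; (R2) if $F=E[F/X]$ and not $E\rhd\{X\}$ then $F=\mathrm{rec}\,X.E$; $\mathrm{rec}\,X.(\tau.(\partial(X+E)\oplus_pP)+F)=\mathrm{rec}\,X.(\tau.(\partial(X+E)\oplus_pP)+\tau.P+F)$; $\mathrm{rec}\,X.(X+E)=\mathrm{rec}\,X.E$; $\mathrm{rec}\,X.(\tau.\partial(X)+E)=\mathrm{rec}\,X.\tau.\partial(E)$;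 $\mathrm{rec}\,X.(\tau.\bigoplus_ip_i(X+E_i)+F)=\mathrm{rec}\,X.(\tau.\partial(X)+\sum_iE_i+F)$. An equation system $\mathcal S:\vec X=\vec S$ consists of distinct formal variables $\vec X=(X_1,\dots,X_n)$ and expressions $\vec S=(S_1,\dots,S_n)$; its free variables $\mathrm{Var}(\mathcal S)$ are the non-formal variables occurring in the $S_i$. It is standard if each $S_i$ has the form $\sum_j\alpha_{i,j}.\bigoplus_{k=1}^np_{i,j,k}X_k+\sum_jV_{i,j}$ with $V_{i,j}\in\mathrm{Var}(\mathcal S)$. $\mathcal S$ is satisfied by $E$ if there are expressions $E_1,\dots,E_n$ with $E$ syntactically equal to $E_1$ and $E_i=S_i[\vec E/\vec X]$ provable for all $i$. For a standard $\mathcal S$, define $X_i\xrightarrow{\alpha}_{\mathcal S}\mu$ (with $\mu$ a distribution over $\{X_1,\dots,X_n\}$) iff $S_i\xrightarrow{\alpha}\mu$; combined transitions, derivations and weak transitions $\Rightarrow_{\mathcal S}$, $\xRightarrow{\alpha}_{\mathcal S}$ are defined from this relation: combined transitions are the least relation with $\delta_{X_i}\xrightarrow{\alpha}\mu$ for $X_i\xrightarrow{\alpha}_{\mathcal S}\mu$ closed under sub-convex combinations; a derivation is $(\mu_i^{\to},\mu_i^{\times})_i$ with $\mu_i^{\to}\xrightarrow{\tau}\mu_{i+1}^{\to}+\mu_{i+1}^{\times}$; $\mu\Rightarrow_{\mathcal S}\nu$ iff some derivation has $\mu=\mu_0^\to+\mu_0^\times$ and $\nu=\sum_i\mu_i^\times$;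 $\xRightarrow{\alpha}_{\mathcal S}$ is $\Rightarrow_{\mathcal S}\xrightarrow{\alpha}\Rightarrow_{\mathcal S}$. A standard $\mathcal S$ is guarded if there is no $i$ with $\delta_{X_i}\xRightarrow{\tau}_{\mathcal S}\delta_{X_i}$. *)

theory Defs
  imports Complex_Main
begin

datatype 'a act = Tau | Act 'a

datatype ('a, 'v) nexp =
    NNil
  | NVar 'v
  | Pre "'a act" "('a, 'v) pexp"
  | Rec 'v "('a, 'v) nexp"
  | NSum "('a, 'v) nexp" "('a, 'v) nexp"
and ('a, 'v) pexp =
    Dirac "('a, 'v) nexp"
  | PCh real "('a, 'v) pexp" "('a, 'v) pexp"

primrec wfN :: "('a, 'v) nexp \<Rightarrow> bool" and wfP :: "('a, 'v) pexp \<Rightarrow> bool" where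
  "wfN NNil = True"
| "wfN (NVar x) = True"
| "wfN (Pre a P) = wfP P"
| "wfN (Rec X E) = wfN E"
| "wfN (NSum E F) = (wfN E \<and> wfN F)"
| "wfP (Dirac E) = wfN E"
| "wfP (PCh p P Q) = (0 < p \<and> p < 1 \<and> wfP P \<and> wfP Q)"

primrec fvN :: "('a, 'v) nexp \<Rightarrow> 'v set" and fvP :: "('a, 'v) pexp \<Rightarrow> 'v set" where
  "fvN NNil = {}"
| "fvN (NVar x) = {x}"
| "fvN (Pre a P) = fvP P"
| "fvN (Rec X E) = fvN E - {X}"
| "fvN (NSum E F) = fvN E \<union> fvN F"
| "fvP (Dirac E) = fvN E"
| "fvP (PCh p P Q) = fvP P \<union> fvP Q"

definition fresh_for :: "'v \<Rightarrow> 'v set \<Rightarrow> 'v" where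
  "fresh_for X A = (if X \<notin> A then X else (SOME Y. Y \<notin> A))"

primrec substN :: "('v \<Rightarrow> ('a, 'v) nexp) \<Rightarrow> ('a, 'v) nexp \<Rightarrow> ('a, 'v) nexp"
  and substP :: "('v \<Rightarrow> ('a, 'v) nexp) \<Rightarrow> ('a, 'v) pexp \<Rightarrow> ('a, 'v) pexp" where
  "substN \<sigma> NNil = NNil"
| "substN \<sigma> (NVar x) = \<sigma> x"
| "substN \<sigma> (Pre a P) = Pre a (substP \<sigma> P)"
| "substN \<sigma> (Rec X E) =
     (let Y = fresh_for X (\<Union>z\<in>fvN E - {X}. fvN (\<sigma> z))
      in Rec Y (substN (\<sigma>(X := NVar Y)) E))"
| "substN \<sigma> (NSum E F) = NSum (substN \<sigma> E) (substN \<sigma> F)"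
| "substP \<sigma> (Dirac E) = Dirac (substN \<sigma> E)"
| "substP \<sigma> (PCh p P Q) = PCh p (substP \<sigma> P) (substP \<sigma> Q)"

definition subst1 :: "('a, 'v) nexp \<Rightarrow> ('a, 'v) nexp \<Rightarrow> 'v \<Rightarrow> ('a, 'v) nexp" where
  "subst1 E F X = substN (NVar(X := F)) E"

text \<open>Iterated probabilistic choice of P_1..P_n with probabilities p_1..p_n
  (right-nested, renormalising the remaining weights).\<close>
fun bigopP :: "real list \<Rightarrow> ('a, 'v) pexp list \<Rightarrow> ('a, 'v) pexp" where
  "bigopP [p] [P] = P"
| "bigopP (p # q # ps) (P # Q # Ps) =
     PCh p P (bigopP (map (\<lambda>r. r / (1 - p)) (q # ps)) (Q # Ps))"
| "bigopP _ _ = Dirac NNil"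

definition bigop :: "real list \<Rightarrow> ('a, 'v) nexp list \<Rightarrow> ('a, 'v) pexp" where
  "bigop ps Es = bigopP ps (map Dirac Es)"

definition valid_probs :: "real list \<Rightarrow> bool" where
  "valid_probs ps \<longleftrightarrow> ps \<noteq> [] \<and> (\<forall>p\<in>set ps. 0 < p) \<and> sum_list ps = 1"

fun sumlist :: "('a, 'v) nexp list \<Rightarrow> ('a, 'v) nexp" where
  "sumlist [] = NNil"
| "sumlist [E] = E"
| "sumlist (E # F # Es) = NSum E (sumlist (F # Es))"

definition delta :: "'b \<Rightarrow> 'b \<Rightarrow> real" where
  "delta x = (\<lambda>y. if y = x then 1 else 0)"

inductive pstep :: "('a, 'v) pexp \<Rightarrow> (('a, 'v) nexp \<Rightarrow> real) \<Rightarrow> bool" where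
  "pstep (Dirac E) (delta E)"
| "pstep P \<mu> \<Longrightarrow> pstep Q \<nu> \<Longrightarrow> pstep (PCh p P Q) (\<lambda>F. p * \<mu> F + (1 - p) * \<nu> F)"

inductive nstep :: "('a, 'v) nexp \<Rightarrow> 'a act \<Rightarrow> (('a, 'v) nexp \<Rightarrow> real) \<Rightarrow> bool" where
  "pstep P \<mu> \<Longrightarrow> nstep (Pre \<alpha> P) \<alpha> \<mu>"
| "nstep (subst1 E (Rec X E) X) \<alpha> \<mu> \<Longrightarrow> nstep (Rec X E) \<alpha> \<mu>"
| "nstep E \<alpha> \<mu> \<Longrightarrow> nstep (NSum E F) \<alpha> \<mu>"
| "nstep E \<alpha> \<mu> \<Longrightarrow> nstep (NSum F E) \<alpha> \<mu>"

inductive ugN :: "('a, 'v) nexp \<Rightarrow> 'v set \<Rightarrow> bool"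
  and ugP :: "('a, 'v) pexp \<Rightarrow> 'v set \<Rightarrow> bool" where
  "ugN (NVar X) {X}"
| "ugP P V \<Longrightarrow> ugN (Pre Tau P) V"
| "ugN E V \<Longrightarrow> V \<noteq> {Y} \<Longrightarrow> ugN (Rec Y E) (V - {Y})"
| "ugN E V \<Longrightarrow> ugN (NSum E F) V"
| "ugN F W \<Longrightarrow> ugN (NSum E F) W"
| "ugN E V \<Longrightarrow> ugP (Dirac E) V"
| "ugP P V \<Longrightarrow> ugP Q W \<Longrightarrow> ugP (PCh p P Q) (V \<union> W)"

primrec guardedN :: "('a, 'v) nexp \<Rightarrow> bool" and guardedP :: "('a, 'v) pexp \<Rightarrow> bool" where
  "guardedN NNil = True"
| "guardedN (NVar x) = True"
| "guardedN (Pre a P) = guardedP P"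
| "guardedN (Rec X F) = (\<not> ugN F {X} \<and> guardedN F)"
| "guardedN (NSum E F) = (guardedN E \<and> guardedN F)"
| "guardedP (Dirac E) = guardedN E"
| "guardedP (PCh p P Q) = (guardedP P \<and> guardedP Q)"

inductive eqN :: "('a, 'v) nexp \<Rightarrow> ('a, 'v) nexp \<Rightarrow> bool"
  and eqP :: "('a, 'v) pexp \<Rightarrow> ('a, 'v) pexp \<Rightarrow> bool" where
  reflN: "eqN E E"
| symN: "eqN E F \<Longrightarrow> eqN F E"
| transN: "eqN E F \<Longrightarrow> eqN F G \<Longrightarrow> eqN E G"
| reflP: "eqP P P"
| symP: "eqP P Q \<Longrightarrow> eqP Q P"
| transP: "eqP P Q \<Longrightarrow> eqP Q R \<Longrightarrow> eqP P R"
| congPre: "eqP P Q \<Longrightarrow> eqN (Pre \<alpha> P) (Pre \<alpha> Q)"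
| congRec: "eqN E F \<Longrightarrow> eqN (Rec X E) (Rec X F)"
| congSum: "eqN E E' \<Longrightarrow> eqN F F' \<Longrightarrow> eqN (NSum E F) (NSum E' F')"
| congDirac: "eqN E F \<Longrightarrow> eqP (Dirac E) (Dirac F)"
| congPCh: "eqP P P' \<Longrightarrow> eqP Q Q' \<Longrightarrow> eqP (PCh p P Q) (PCh p P' Q')"
| alpha: "Y \<notin> fvN (Rec X E) \<Longrightarrow> eqN (Rec X E) (Rec Y (subst1 E (NVar Y) X))"
| N1: "eqN (NSum E F) (NSum F E)"
| N2: "eqN (NSum E (NSum F G)) (NSum (NSum E F) G)"
| N3: "eqN (NSum E E) E"
| N4: "eqN (NSum E NNil) E"
| P1: "0 < p \<Longrightarrow> p < 1 \<Longrightarrow> eqP (PCh p P Q) (PCh (1 - p) Q P)"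
| P2: "0 < p \<Longrightarrow> 0 < q \<Longrightarrow> p + q < 1 \<Longrightarrow>
       eqP (PCh p P (PCh (q / (1 - p)) Q R)) (PCh (p + q) (PCh (p / (p + q)) P Q) R)"
| P3: "0 < p \<Longrightarrow> p < 1 \<Longrightarrow> eqP (PCh p P P) P"
| T1: "0 < p \<Longrightarrow> p < 1 \<Longrightarrow>
       eqN (Pre \<alpha> (PCh p (Dirac (Pre Tau (Dirac E))) P)) (Pre \<alpha> (PCh p (Dirac E) P))"
| T2: "valid_probs ps \<Longrightarrow> length Es = length ps \<Longrightarrow>
       eqN (NSum (Pre Tau (bigop ps (map (\<lambda>E. NSum E F) Es))) F)
           (Pre Tau (bigop ps (map (\<lambda>E. NSum E F) Es)))"
| T3: "valid_probs ps \<Longrightarrow> length Es = length ps \<Longrightarrow> length Ps = length ps \<Longrightarrow>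
       eqN (NSum (Pre Tau (bigop ps (map2 (\<lambda>E P. NSum E (Pre \<alpha> P)) Es Ps))) (Pre \<alpha> (bigopP ps Ps)))
           (Pre Tau (bigop ps (map2 (\<lambda>E P. NSum E (Pre \<alpha> P)) Es Ps)))"
| T4: "valid_probs ps \<Longrightarrow> length Es = length ps \<Longrightarrow> length Ps = length ps \<Longrightarrow>
       eqN (NSum (Pre \<alpha> (bigop ps (map2 (\<lambda>E P. NSum E (Pre Tau P)) Es Ps))) (Pre \<alpha> (bigopP ps Ps)))
           (Pre \<alpha> (bigop ps (map2 (\<lambda>E P. NSum E (Pre Tau P)) Es Ps)))"
| C: "0 < p \<Longrightarrow> p < 1 \<Longrightarrow>
      eqN (NSum (Pre \<alpha> P) (Pre \<alpha> Q))
          (NSum (NSum (Pre \<alpha> P) (Pre \<alpha> (PCh p P Q))) (Pre \<alpha> Q))"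
| R1: "eqN (Rec X E) (subst1 E (Rec X E) X)"
| R2: "eqN F (subst1 E F X) \<Longrightarrow> \<not> ugN E {X} \<Longrightarrow> eqN F (Rec X E)"
| R3: "0 < p \<Longrightarrow> p < 1 \<Longrightarrow>
       eqN (Rec X (NSum (Pre Tau (PCh p (Dirac (NSum (NVar X) E)) P)) F))
           (Rec X (NSum (NSum (Pre Tau (PCh p (Dirac (NSum (NVar X) E)) P)) (Pre Tau P)) F))"
| R4: "eqN (Rec X (NSum (NVar X) E)) (Rec X E)"
| R5: "eqN (Rec X (NSum (Pre Tau (Dirac (NVar X))) E)) (Rec X (Pre Tau (Dirac E)))"
| R6: "valid_probs ps \<Longrightarrow> length Es = length ps \<Longrightarrow>
       eqN (Rec X (NSum (Pre Tau (bigop ps (map (\<lambda>E. NSum (NVar X) E) Es))) F))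
           (Rec X (NSum (NSum (Pre Tau (Dirac (NVar X))) (sumlist Es)) F))"

type_synonym ('a, 'v) eqsys = "('v \<times> ('a, 'v) nexp) list"

definition formal :: "('a, 'v) eqsys \<Rightarrow> 'v set" where
  "formal S = set (map fst S)"

definition is_eqsys :: "('a, 'v) eqsys \<Rightarrow> bool" where
  "is_eqsys S \<longleftrightarrow> S \<noteq> [] \<and> distinct (map fst S)"

definition sys_vars :: "('a, 'v) eqsys \<Rightarrow> 'v set" where
  "sys_vars S = (\<Union>(X, T)\<in>set S. fvN T) - formal S"

definition standard_rhs :: "('a, 'v) eqsys \<Rightarrow> ('a, 'v) nexp \<Rightarrow> bool" where
  "standard_rhs S T \<longleftrightarrow>
     (\<exists>L Vs. T = sumlist (map (\<lambda>(\<alpha>, ps, Xs). Pre \<alpha> (bigop ps (map NVar Xs))) L @ map NVar Vs)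
        \<and> (\<forall>(\<alpha>, ps, Xs)\<in>set L. valid_probs ps \<and> length Xs = length ps \<and> distinct Xs
                               \<and> set Xs \<subseteq> formal S)
        \<and> set Vs \<inter> formal S = {})"

definition standard :: "('a, 'v) eqsys \<Rightarrow> bool" where
  "standard S \<longleftrightarrow> (\<forall>(X, T)\<in>set S. standard_rhs S T)"

definition satisfies :: "('a, 'v) nexp \<Rightarrow> ('a, 'v) eqsys \<Rightarrow> bool" where
  "satisfies E S \<longleftrightarrow>
     (\<exists>Es :: 'v \<Rightarrow> ('a, 'v) nexp. Es (fst (hd S)) = E \<and>
        (\<forall>(X, T)\<in>set S. eqN (Es X) (substN (\<lambda>Y. if Y \<in> formal S then Es Y else NVar Y) T)))"

definition std_step :: "('a, 'v) eqsys \<Rightarrow> 'v \<Rightarrow> 'a act \<Rightarrow> ('v \<Rightarrow> real) \<Rightarrow> bool" where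
  "std_step S X \<alpha> \<nu> \<longleftrightarrow> (\<exists>T \<mu>. (X, T) \<in> set S \<and> nstep T \<alpha> \<mu> \<and> \<nu> = (\<lambda>Y. \<mu> (NVar Y)))"

definition cstep :: "('a, 'v) eqsys \<Rightarrow> ('v \<Rightarrow> real) \<Rightarrow> 'a act \<Rightarrow> ('v \<Rightarrow> real) \<Rightarrow> bool" where
  "cstep S \<mu> \<alpha> \<nu> \<longleftrightarrow>
     (\<exists>(m :: nat) (c :: nat \<Rightarrow> real) (s :: nat \<Rightarrow> 'v) (\<nu>' :: nat \<Rightarrow> 'v \<Rightarrow> real).
        (\<forall>i<m. 0 \<le> c i \<and> std_step S (s i) \<alpha> (\<nu>' i)) \<and> (\<Sum>i<m. c i) \<le> 1 \<and>
        \<mu> = (\<lambda>Y. \<Sum>i<m. c i * delta (s i) Y) \<and>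
        \<nu> = (\<lambda>Y. \<Sum>i<m. c i * \<nu>' i Y))"

definition weak :: "('a, 'v) eqsys \<Rightarrow> ('v \<Rightarrow> real) \<Rightarrow> ('v \<Rightarrow> real) \<Rightarrow> bool" where
  "weak S \<mu> \<nu> \<longleftrightarrow>
     (\<exists>(mt :: nat \<Rightarrow> 'v \<Rightarrow> real) (mx :: nat \<Rightarrow> 'v \<Rightarrow> real).
        (\<forall>i Y. 0 \<le> mt i Y \<and> 0 \<le> mx i Y) \<and>
        (\<forall>i. cstep S (mt i) Tau (\<lambda>Y. mt (Suc i) Y + mx (Suc i) Y)) \<and>
        \<mu> = (\<lambda>Y. mt 0 Y + mx 0 Y) \<and>
        (\<forall>Y. (\<lambda>i. mx i Y) sums \<nu> Y))"

definition weak_act :: "('a, 'v) eqsys \<Rightarrow> ('v \<Rightarrow> real) \<Rightarrow> 'a act \<Rightarrow> ('v \<Rightarrow> real) \<Rightarrow> bool" where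
  "weak_act S \<mu> \<alpha> \<nu> \<longleftrightarrow> (\<exists>\<mu>1 \<mu>2. weak S \<mu> \<mu>1 \<and> cstep S \<mu>1 \<alpha> \<mu>2 \<and> weak S \<mu>2 \<nu>)"

definition guarded_sys :: "('a, 'v) eqsys \<Rightarrow> bool" where
  "guarded_sys S \<longleftrightarrow> \<not> (\<exists>X\<in>formal S. weak_act S (delta X) Tau (delta X))"

end

theory Submission
  imports Defs
begin

text \<open>The system is built by structural induction on \<open>E\<close>, generalised to the lists of branches
  of probabilistic choices and to arbitrary instantiations of the free variables.

  Guardedness of the system is certified by a ranking function \<open>w \<ge> 1\<close> whose expected value
  drops by at least \<open>1\<close> along every \<open>\<tau>\<close>-transition.  Unfolding \<open>rec X. E\<close> creates new
  \<open>\<tau>\<close>-transitions to the root; the ranking function survives because, \<open>E\<close> not being unguarded in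
  \<open>X\<close>, the root reaches the states with summand \<open>X\<close> by \<open>\<tau>\<close>-steps with probability
  bounded by some \<open>h(r) < 1\<close>, where \<open>h\<close> is a superharmonic hitting bound.\<close>

section \<open>Substitution\<close>

lemma finite_fv: "finite (fvN E)" "finite (fvP P)"
  for E :: "('a, 'v) nexp" and P :: "('a, 'v) pexp"
  by (induct E and P) auto

lemma fresh_for_notin:
  assumes "infinite (UNIV :: 'v set)" "finite (A :: 'v set)"
  shows "fresh_for X A \<notin> A"
  using ex_new_if_finite[OF assms] someI_ex[of "\<lambda>Y. Y \<notin> A"] by (auto simp: fresh_for_def)

lemma substN_Rec:
  "substN \<sigma> (Rec X E) =
     Rec (fresh_for X (\<Union>z\<in>fvN E - {X}. fvN (\<sigma> z)))
       (substN (\<sigma>(X := NVar (fresh_for X (\<Union>z\<in>fvN E - {X}. fvN (\<sigma> z))))) E)"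
  by (simp add: Let_def)

declare substN.simps(4)[simp del]

lemma subst_cong:
  fixes E :: "('a, 'v) nexp" and P :: "('a, 'v) pexp"
  shows "(\<And>v. v \<in> fvN E \<Longrightarrow> \<sigma> v = \<sigma>' v) \<Longrightarrow> substN \<sigma> E = substN \<sigma>' E"
    and "(\<And>v. v \<in> fvP P \<Longrightarrow> \<sigma> v = \<sigma>' v) \<Longrightarrow> substP \<sigma> P = substP \<sigma>' P"
proof (induct E and P arbitrary: \<sigma> \<sigma>' and \<sigma> \<sigma>')
  case (Rec X E)
  have "(\<Union>z\<in>fvN E - {X}. fvN (\<sigma> z)) = (\<Union>z\<in>fvN E - {X}. fvN (\<sigma>' z))"
    using Rec.prems by auto
  moreover have "substN (\<sigma>(X := NVar Y)) E = substN (\<sigma>'(X := NVar Y)) E" for Y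
    by (rule Rec.hyps) (use Rec.prems in auto)
  ultimately show ?case by (simp only: substN_Rec)
next
  case (Pre a P)
  have "substP \<sigma> P = substP \<sigma>' P" by (rule Pre.hyps) (use Pre.prems in auto)
  then show ?case by simp
next
  case (NSum E F)
  have "substN \<sigma> E = substN \<sigma>' E" by (rule NSum.hyps) (use NSum.prems in auto)
  moreover have "substN \<sigma> F = substN \<sigma>' F" by (rule NSum.hyps) (use NSum.prems in auto)
  ultimately show ?case by simp
next
  case (Dirac E)
  have "substN \<sigma> E = substN \<sigma>' E" by (rule Dirac.hyps) (use Dirac.prems in auto)
  then show ?case by simp
next
  case (PCh p P Q)
  have "substP \<sigma> P = substP \<sigma>' P" by (rule PCh.hyps) (use PCh.prems in auto)
  moreover have "substP \<sigma> Q = substP \<sigma>' Q" by (rule PCh.hyps) (use PCh.prems in auto)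
  ultimately show ?case by simp
qed simp_all

lemma subst_id:
  fixes E :: "('a, 'v) nexp" and P :: "('a, 'v) pexp"
  shows "(\<And>v. v \<in> fvN E \<Longrightarrow> \<sigma> v = NVar v) \<Longrightarrow> substN \<sigma> E = E"
    and "(\<And>v. v \<in> fvP P \<Longrightarrow> \<sigma> v = NVar v) \<Longrightarrow> substP \<sigma> P = P"
proof (induct E and P arbitrary: \<sigma> and \<sigma>)
  case (Rec X E)
  have "(\<Union>z\<in>fvN E - {X}. fvN (\<sigma> z)) = fvN E - {X}"
    using Rec.prems by auto
  then have "fresh_for X (\<Union>z\<in>fvN E - {X}. fvN (\<sigma> z)) = X"
    by (simp add: fresh_for_def)
  moreover have "substN (\<sigma>(X := NVar X)) E = E"
    by (rule Rec.hyps) (use Rec.prems in auto)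
  ultimately show ?case by (simp only: substN_Rec)
next
  case (Pre a P)
  have "substP \<sigma> P = P" by (rule Pre.hyps) (use Pre.prems in auto)
  then show ?case by simp
next
  case (NSum E F)
  have "substN \<sigma> E = E" by (rule NSum.hyps) (use NSum.prems in auto)
  moreover have "substN \<sigma> F = F" by (rule NSum.hyps) (use NSum.prems in auto)
  ultimately show ?case by simp
next
  case (Dirac E)
  have "substN \<sigma> E = E" by (rule Dirac.hyps) (use Dirac.prems in auto)
  then show ?case by simp
next
  case (PCh p P Q)
  have "substP \<sigma> P = P" by (rule PCh.hyps) (use PCh.prems in auto)
  moreover have "substP \<sigma> Q = Q" by (rule PCh.hyps) (use PCh.prems in auto)
  ultimately show ?case by simp
qed simp_all

lemma fv_subst:
  fixes E :: "('a, 'v) nexp" and P :: "('a, 'v) pexp"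
  assumes inf: "infinite (UNIV :: 'v set)"
  shows "fvN (substN \<sigma> E) = (\<Union>v\<in>fvN E. fvN (\<sigma> v))"
    and "fvP (substP \<sigma> P) = (\<Union>v\<in>fvP P. fvN (\<sigma> v))"
proof (induct E and P arbitrary: \<sigma> and \<sigma>)
  case (Rec X E)
  let ?A = "\<Union>z\<in>fvN E - {X}. fvN (\<sigma> z)"
  define Y where "Y = fresh_for X ?A"
  have Y: "Y \<notin> ?A"
    unfolding Y_def by (rule fresh_for_notin[OF inf]) (simp add: finite_fv)
  have "fvN (substN \<sigma> (Rec X E)) = fvN (substN (\<sigma>(X := NVar Y)) E) - {Y}"
    by (simp add: substN_Rec Y_def)
  also have "\<dots> = (\<Union>v\<in>fvN E. fvN ((\<sigma>(X := NVar Y)) v)) - {Y}"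
    using Rec by simp
  also have "\<dots> = ?A"
    using Y by (auto split: if_splits)
  finally show ?case by simp
qed auto

lemmas eqN_refl = eqN_eqP.reflN
lemmas eqN_sym = eqN_eqP.symN
lemmas eqN_trans [trans] = eqN_eqP.transN
lemmas eqP_refl = eqN_eqP.reflP
lemmas eqP_sym = eqN_eqP.symP
lemmas eqP_trans [trans] = eqN_eqP.transP

text \<open>The renaming step of \<open>subst_subst\<close>; \<open>comp\<close> is its induction hypothesis.\<close>

lemma eqN_Rec_rename:
  fixes E :: "('a, 'v) nexp"
  assumes inf: "infinite (UNIV :: 'v set)"
    and comp: "\<And>\<sigma> \<tau>. eqN (substN \<sigma> (substN \<tau> E)) (substN (\<lambda>v. substN \<sigma> (\<tau> v)) E)"
    and Y: "\<And>v. v \<in> fvN E - {X} \<Longrightarrow> Y \<notin> fvN (\<kappa> v)"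
    and Z: "\<And>v. v \<in> fvN E - {X} \<Longrightarrow> Z \<notin> fvN (\<kappa> v)"
  shows "eqN (Rec Y (substN (\<kappa>(X := NVar Y)) E)) (Rec Z (substN (\<kappa>(X := NVar Z)) E))"
proof (cases "Y = Z")
  case False
  define B where "B = substN (\<kappa>(X := NVar Y)) E"
  have "eqN (subst1 B (NVar Z) Y)
      (substN (\<lambda>v. substN (NVar(Y := NVar Z)) ((\<kappa>(X := NVar Y)) v)) E)"
    unfolding subst1_def B_def by (rule comp)
  also have "substN (\<lambda>v. substN (NVar(Y := NVar Z)) ((\<kappa>(X := NVar Y)) v)) E
      = substN (\<kappa>(X := NVar Z)) E"
    by (rule subst_cong) (use Y in \<open>auto intro!: subst_id(1)\<close>)
  finally have body: "eqN (subst1 B (NVar Z) Y) (substN (\<kappa>(X := NVar Z)) E)" .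
  have "Z \<notin> fvN (Rec Y B)"
    using Z False by (auto simp: B_def fv_subst(1)[OF inf] split: if_splits)
  then have "eqN (Rec Y B) (Rec Z (subst1 B (NVar Z) Y))"
    by (rule eqN_eqP.alpha)
  also have "eqN \<dots> (Rec Z (substN (\<kappa>(X := NVar Z)) E))"
    using body by (rule eqN_eqP.congRec)
  finally show ?thesis unfolding B_def .
qed (simp add: eqN_refl)

lemma subst_subst:
  fixes E :: "('a, 'v) nexp" and P :: "('a, 'v) pexp"
  assumes inf: "infinite (UNIV :: 'v set)"
  shows "eqN (substN \<sigma> (substN \<tau> E)) (substN (\<lambda>v. substN \<sigma> (\<tau> v)) E)"
    and "eqP (substP \<sigma> (substP \<tau> P)) (substP (\<lambda>v. substN \<sigma> (\<tau> v)) P)"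
proof (induct E and P arbitrary: \<sigma> \<tau> and \<sigma> \<tau>)
  case (Rec X E)
  define \<kappa> where "\<kappa> = (\<lambda>v. substN \<sigma> (\<tau> v))"
  define Y where "Y = fresh_for X (\<Union>z\<in>fvN E - {X}. fvN (\<tau> z))"
  define G where "G = substN (\<tau>(X := NVar Y)) E"
  define Y' where "Y' = fresh_for Y (\<Union>z\<in>fvN G - {Y}. fvN (\<sigma> z))"
  define Z where "Z = fresh_for X (\<Union>z\<in>fvN E - {X}. fvN (\<kappa> z))"
  have Y: "Y \<notin> (\<Union>z\<in>fvN E - {X}. fvN (\<tau> z))"
    unfolding Y_def by (rule fresh_for_notin[OF inf]) (simp add: finite_fv)
  have Y': "Y' \<notin> (\<Union>z\<in>fvN G - {Y}. fvN (\<sigma> z))"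
    unfolding Y'_def by (rule fresh_for_notin[OF inf]) (simp add: finite_fv)
  have Z: "Z \<notin> (\<Union>z\<in>fvN E - {X}. fvN (\<kappa> z))"
    unfolding Z_def by (rule fresh_for_notin[OF inf]) (simp add: finite_fv)
  have Y'\<kappa>: "Y' \<notin> fvN (\<kappa> v)" if "v \<in> fvN E - {X}" for v
  proof -
    have "fvN (\<tau> v) \<subseteq> fvN G - {Y}"
      using that Y unfolding G_def fv_subst[OF inf] by auto
    then show ?thesis using Y' unfolding \<kappa>_def fv_subst[OF inf] by auto
  qed
  have "substN \<sigma> (substN \<tau> (Rec X E)) = Rec Y' (substN (\<sigma>(Y := NVar Y')) G)"
    by (simp add: substN_Rec Y'_def G_def Y_def)
  also have "eqN \<dots> (Rec Y' (substN (\<lambda>v. substN (\<sigma>(Y := NVar Y')) ((\<tau>(X := NVar Y)) v)) E))"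
    unfolding G_def by (intro eqN_eqP.congRec Rec.hyps)
  also have "substN (\<lambda>v. substN (\<sigma>(Y := NVar Y')) ((\<tau>(X := NVar Y)) v)) E
      = substN (\<kappa>(X := NVar Y')) E"
  proof (rule subst_cong)
    fix v assume "v \<in> fvN E"
    then show "substN (\<sigma>(Y := NVar Y')) ((\<tau>(X := NVar Y)) v) = (\<kappa>(X := NVar Y')) v"
      using Y by (cases "v = X") (auto simp: \<kappa>_def intro!: subst_cong(1))
  qed
  also have "eqN (Rec Y' (substN (\<kappa>(X := NVar Y')) E)) (Rec Z (substN (\<kappa>(X := NVar Z)) E))"
    by (rule eqN_Rec_rename[OF inf Rec.hyps]) (use Y'\<kappa> Z in auto)
  also have "Rec Z (substN (\<kappa>(X := NVar Z)) E) = substN \<kappa> (Rec X E)"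
    by (simp add: substN_Rec Z_def)
  finally show ?case unfolding \<kappa>_def .
qed (auto intro: eqN_eqP.intros)

lemma subst_Rec_unfold:
  fixes E :: "('a, 'v) nexp"
  assumes inf: "infinite (UNIV :: 'v set)"
  shows "eqN (substN \<theta> (Rec X E)) (substN (\<theta>(X := substN \<theta> (Rec X E))) E)"
proof -
  define Y where "Y = fresh_for X (\<Union>z\<in>fvN E - {X}. fvN (\<theta> z))"
  define F where "F = substN \<theta> (Rec X E)"
  have Y: "Y \<notin> (\<Union>z\<in>fvN E - {X}. fvN (\<theta> z))"
    unfolding Y_def by (rule fresh_for_notin[OF inf]) (simp add: finite_fv)
  have F: "F = Rec Y (substN (\<theta>(X := NVar Y)) E)"
    by (simp add: F_def substN_Rec Y_def)
  have "eqN F (substN (NVar(Y := F)) (substN (\<theta>(X := NVar Y)) E))"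
    using eqN_eqP.R1[of Y "substN (\<theta>(X := NVar Y)) E"] by (simp add: F[symmetric] subst1_def)
  also have "eqN \<dots> (substN (\<lambda>v. substN (NVar(Y := F)) ((\<theta>(X := NVar Y)) v)) E)"
    by (rule subst_subst(1)[OF inf])
  also have "substN (\<lambda>v. substN (NVar(Y := F)) ((\<theta>(X := NVar Y)) v)) E = substN (\<theta>(X := F)) E"
    by (rule subst_cong) (use Y in \<open>auto intro!: subst_id(1)\<close>)
  finally show ?thesis unfolding F_def .
qed

section \<open>Derived laws for iterated sums and choices\<close>

lemma substN_sumlist: "substN \<sigma> (sumlist Es) = sumlist (map (substN \<sigma>) Es)"
  by (induct Es rule: sumlist.induct) auto

lemma fvN_sumlist: "fvN (sumlist Es) = (\<Union>E\<in>set Es. fvN E)"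
  by (induct Es rule: sumlist.induct) auto

lemma substP_bigopP: "substP \<sigma> (bigopP ps Ps) = bigopP ps (map (substP \<sigma>) Ps)"
  by (induct ps Ps rule: bigopP.induct) auto

lemma fvP_bigopP: "fvP (bigopP ps Ps) \<subseteq> (\<Union>P\<in>set Ps. fvP P)"
  by (induct ps Ps rule: bigopP.induct) auto

lemma eqN_sumlist_cong: "list_all2 eqN Es Fs \<Longrightarrow> eqN (sumlist Es) (sumlist Fs)"
proof (induct Es arbitrary: Fs rule: sumlist.induct)
  case (3 E F Es)
  then obtain G Gs where "Fs = G # Gs" "eqN E G" "list_all2 eqN (F # Es) Gs"
    by (auto simp: list_all2_Cons1)
  moreover from this(3) obtain H Hs where "Gs = H # Hs"
    by (auto simp: list_all2_Cons1)
  ultimately show ?case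
    using "3.hyps" by (auto intro: eqN_eqP.congSum)
qed (auto simp: list_all2_Cons1 intro: eqN_refl)

lemma eqP_bigopP_cong: "list_all2 eqP Ps Qs \<Longrightarrow> eqP (bigopP ps Ps) (bigopP ps Qs)"
proof (induct ps Ps arbitrary: Qs rule: bigopP.induct)
  case (2 p q ps P Q Ps)
  then obtain P' Q' Qs' where "Qs = P' # Q' # Qs'" "eqP P P'" "list_all2 eqP (Q # Ps) (Q' # Qs')"
    by (auto simp: list_all2_Cons1)
  then show ?case
    using "2.hyps" by (auto intro: eqN_eqP.congPCh)
qed (auto simp: list_all2_Cons1 intro: eqP_refl)

lemma eqN_sumlist_Cons: "eqN (sumlist (E # Es)) (NSum E (sumlist Es))"
  by (cases Es) (simp_all add: eqN_sym[OF eqN_eqP.N4] eqN_refl)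

lemma eqN_sumlist_append: "eqN (NSum (sumlist Es) (sumlist Fs)) (sumlist (Es @ Fs))"
proof (induct Es)
  case Nil
  have "eqN (NSum NNil (sumlist Fs)) (NSum (sumlist Fs) NNil)" by (rule eqN_eqP.N1)
  also have "eqN \<dots> (sumlist Fs)" by (rule eqN_eqP.N4)
  finally show ?case by simp
next
  case (Cons E Es)
  have "eqN (NSum (sumlist (E # Es)) (sumlist Fs)) (NSum (NSum E (sumlist Es)) (sumlist Fs))"
    by (intro eqN_eqP.congSum eqN_sumlist_Cons eqN_refl)
  also have "eqN \<dots> (NSum E (NSum (sumlist Es) (sumlist Fs)))"
    by (rule eqN_sym, rule eqN_eqP.N2)
  also have "eqN \<dots> (NSum E (sumlist (Es @ Fs)))"
    by (intro eqN_eqP.congSum Cons eqN_refl)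
  also have "eqN \<dots> (sumlist (E # Es @ Fs))"
    by (rule eqN_sym, rule eqN_sumlist_Cons)
  finally show ?case by simp
qed

lemma eqN_sumlist_absorb: "F \<in> set Es \<Longrightarrow> eqN (NSum (sumlist Es) F) (sumlist Es)"
proof (induct Es)
  case (Cons E Es)
  have "eqN (NSum (sumlist (E # Es)) F) (NSum (NSum E (sumlist Es)) F)"
    by (intro eqN_eqP.congSum eqN_sumlist_Cons eqN_refl)
  also have "eqN \<dots> (NSum E (NSum (sumlist Es) F))"
    by (rule eqN_sym, rule eqN_eqP.N2)
  also have "eqN \<dots> (NSum E (sumlist Es))"
  proof (cases "F \<in> set Es")
    case True
    then show ?thesis by (intro eqN_eqP.congSum Cons eqN_refl)
  next
    case False
    then have "F = E" using Cons by simp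
    have "eqN (NSum E (NSum (sumlist Es) E)) (NSum E (NSum E (sumlist Es)))"
      by (intro eqN_eqP.congSum eqN_eqP.N1 eqN_refl)
    also have "eqN \<dots> (NSum (NSum E E) (sumlist Es))" by (rule eqN_eqP.N2)
    also have "eqN \<dots> (NSum E (sumlist Es))" by (intro eqN_eqP.congSum eqN_eqP.N3 eqN_refl)
    finally show ?thesis using \<open>F = E\<close> by simp
  qed
  also have "eqN \<dots> (sumlist (E # Es))"
    by (rule eqN_sym, rule eqN_sumlist_Cons)
  finally show ?case .
qed simp

lemma eqN_sumlist_subset:
  "set Fs \<subseteq> set Es \<Longrightarrow> eqN (NSum (sumlist Es) (sumlist Fs)) (sumlist Es)"
proof (induct Fs)
  case Nil
  then show ?case by (simp add: eqN_eqP.N4)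
next
  case (Cons F Fs)
  have "eqN (NSum (sumlist Es) (sumlist (F # Fs))) (NSum (sumlist Es) (NSum F (sumlist Fs)))"
    by (intro eqN_eqP.congSum eqN_sumlist_Cons eqN_refl)
  also have "eqN \<dots> (NSum (NSum (sumlist Es) F) (sumlist Fs))"
    by (rule eqN_eqP.N2)
  also have "eqN \<dots> (NSum (sumlist Es) (sumlist Fs))"
    using Cons.prems by (intro eqN_eqP.congSum eqN_sumlist_absorb eqN_refl) auto
  also have "eqN \<dots> (sumlist Es)"
    using Cons by auto
  finally show ?case .
qed

lemma eqN_sumlist_set: "set Es = set Fs \<Longrightarrow> eqN (sumlist Es) (sumlist Fs)"
proof -
  assume eq: "set Es = set Fs"
  have "eqN (sumlist Es) (NSum (sumlist Es) (sumlist Fs))"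
    by (rule eqN_sym, rule eqN_sumlist_subset) (use eq in auto)
  also have "eqN \<dots> (NSum (sumlist Fs) (sumlist Es))"
    by (rule eqN_eqP.N1)
  also have "eqN \<dots> (sumlist Fs)"
    using eq by (intro eqN_sumlist_subset) auto
  finally show ?thesis .
qed

primrec branch_probs :: "('a, 'v) pexp \<Rightarrow> real list" where
  "branch_probs (Dirac E) = [1]"
| "branch_probs (PCh p P Q) = map ((*) p) (branch_probs P) @ map ((*) (1 - p)) (branch_probs Q)"

primrec branches :: "('a, 'v) pexp \<Rightarrow> ('a, 'v) nexp list" where
  "branches (Dirac E) = [E]"
| "branches (PCh p P Q) = branches P @ branches Q"

lemma pexp_induct [case_names Dirac PCh]:
  fixes P :: "('a, 'v) pexp"
  assumes "\<And>E. Q (Dirac E)" and "\<And>p P1 P2. Q P1 \<Longrightarrow> Q P2 \<Longrightarrow> Q (PCh p P1 P2)"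
  shows "Q P"
  by (rule conjunct2[OF nexp_pexp.induct[of "\<lambda>_. True" Q]]) (auto intro: assms)

lemma length_branch_probs: "length (branch_probs P) = length (branches P)"
  by (induct P rule: pexp_induct) auto

lemma fv_branches: "fvP P = (\<Union>E\<in>set (branches P). fvN E)"
  by (induct P rule: pexp_induct) auto

lemma valid_branch_probs: "wfP P \<Longrightarrow> valid_probs (branch_probs P)"
  by (induct P rule: pexp_induct) (auto simp: valid_probs_def sum_list_const_mult)

lemma valid_probs_ConsD:
  assumes "valid_probs (p # q # ps)"
  shows "0 < p" and "p < 1" and "valid_probs (map (\<lambda>r. r / (1 - p)) (q # ps))"
proof -
  have pos: "\<forall>x\<in>set (p # q # ps). 0 < x" and sum: "sum_list (p # q # ps) = 1"
    using assms by (auto simp: valid_probs_def)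
  have "0 \<le> sum_list ps" using pos by (intro sum_list_nonneg) auto
  then show "0 < p" and p1: "p < 1" using sum pos by auto
  have "sum_list (map (\<lambda>r. r / (1 - p)) (q # ps)) = sum_list (q # ps) / (1 - p)"
    by (induct ps) (auto simp: add_divide_distrib)
  also have "\<dots> = 1" using sum p1 by simp
  finally show "valid_probs (map (\<lambda>r. r / (1 - p)) (q # ps))"
    using pos p1 by (auto simp: valid_probs_def)
qed

lemma renormalise_weights:
  fixes a p :: real
  assumes "a < 1" "p * a < 1"
  shows "map ((*) (p * (1 - a) / (1 - p * a))) (map (\<lambda>r. r / (1 - a)) ps)
      @ map ((*) (1 - p * (1 - a) / (1 - p * a))) qs
    = map (\<lambda>r. r / (1 - p * a)) (map ((*) p) ps @ map ((*) (1 - p)) qs)"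
proof -
  have "p * (1 - a) / (1 - p * a) * r / (1 - a) = p * r / (1 - p * a)" for r
  proof -
    have "p * (1 - a) / (1 - p * a) * r / (1 - a) = (1 - a) * (p * r) / ((1 - a) * (1 - p * a))"
      by (simp add: algebra_simps)
    also have "\<dots> = p * r / (1 - p * a)"
      using assms(1) by (intro mult_divide_mult_cancel_left) simp
    finally show ?thesis .
  qed
  moreover have "1 - p * (1 - a) / (1 - p * a) = (1 - p) / (1 - p * a)"
    using assms(2) by (simp add: field_simps)
  ultimately show ?thesis by simp
qed

text \<open>The weights of the left-hand choice are peeled off one at a time by \<open>P2\<close>.\<close>

lemma eqP_PCh_bigopP:
  fixes p :: real
  assumes "valid_probs ps" "length Ps = length ps" "valid_probs qs" "length Qs = length qs"
    and "0 < p" "p < 1"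
  shows "eqP (PCh p (bigopP ps Ps) (bigopP qs Qs))
             (bigopP (map ((*) p) ps @ map ((*) (1 - p)) qs) (Ps @ Qs))"
  using assms
proof (induct "length ps" arbitrary: ps p Ps rule: less_induct)
  case less
  obtain q qs' where qs: "qs = q # qs'"
    using less.prems(3) by (cases qs) (auto simp: valid_probs_def)
  obtain Q Qs' where Qs: "Qs = Q # Qs'"
    using less.prems(4) qs by (cases Qs) auto
  obtain a ps' where ps: "ps = a # ps'"
    using less.prems(1) by (cases ps) (auto simp: valid_probs_def)
  obtain P1 Ps' where Ps: "Ps = P1 # Ps'"
    using less.prems(2) ps by (cases Ps) auto
  show ?case
  proof (cases ps')
    case Nil
    then have "a = 1" "Ps' = []"
      using less.prems(1,2) ps Ps by (simp_all add: valid_probs_def)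
    moreover have "map (\<lambda>r. r / (1 - p)) (map ((*) (1 - p)) qs) = qs"
      using less.prems(6) by (induct qs) auto
    ultimately show ?thesis
      by (simp add: ps Ps Nil qs Qs eqP_refl)
  next
    case (Cons b ps'')
    obtain P2 Ps'' where Ps': "Ps' = P2 # Ps''"
      using less.prems(2) ps Ps Cons by (cases Ps') auto
    have a0: "0 < a" and a1: "a < 1" and vt: "valid_probs (map (\<lambda>r. r / (1 - a)) (b # ps''))"
      using valid_probs_ConsD less.prems(1) unfolding ps Cons by blast+
    define ps1 where "ps1 = map (\<lambda>r. r / (1 - a)) (b # ps'')"
    define R where "R = bigopP ps1 (P2 # Ps'')"
    define Q0 where "Q0 = bigopP qs Qs"
    define s where "s = p * a"
    define t where "t = p * (1 - a)"
    define p' where "p' = t / (1 - s)"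
    have s0: "0 < s" and t0: "0 < t" and st: "s + t < 1" "s + t = p" "s / (s + t) = a"
      using less.prems a1 a0 by (auto simp: s_def t_def algebra_simps)
    have p'0: "0 < p'" and p'1: "p' < 1"
      using st t0 by (auto simp: p'_def field_simps)
    have "eqP (PCh p (PCh a P1 R) Q0) (PCh s P1 (PCh p' R Q0))"
      using eqN_eqP.P2[OF s0 t0 st(1), of P1 R Q0] st(2,3) by (simp add: p'_def eqP_sym)
    also have "eqP (PCh s P1 (PCh p' R Q0))
        (PCh s P1 (bigopP (map ((*) p') ps1 @ map ((*) (1 - p')) qs) ((P2 # Ps'') @ Qs)))"
      unfolding R_def Q0_def
      by (intro eqN_eqP.congPCh eqP_refl less.hyps)
        (use vt less.prems p'0 p'1 Ps' Ps ps Cons in \<open>auto simp: ps1_def\<close>)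
    also have "map ((*) p') ps1 @ map ((*) (1 - p')) qs
        = map (\<lambda>r. r / (1 - s)) (map ((*) p) (b # ps'') @ map ((*) (1 - p)) qs)"
      unfolding p'_def t_def s_def ps1_def using a1 st(1) t0
      by (intro renormalise_weights) (auto simp: s_def)
    finally show ?thesis
      by (simp add: ps Cons Ps Ps' R_def ps1_def Q0_def s_def)
  qed
qed

lemma eqP_subst_flatten:
  "wfP P \<Longrightarrow>
    eqP (substP \<theta> P) (bigopP (branch_probs P) (map Dirac (map (substN \<theta>) (branches P))))"
proof (induct P rule: pexp_induct)
  case (Dirac E)
  then show ?case by (simp add: eqP_refl)
next
  case (PCh p P Q)
  have "eqP (substP \<theta> (PCh p P Q))
      (PCh p (bigopP (branch_probs P) (map Dirac (map (substN \<theta>) (branches P))))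
        (bigopP (branch_probs Q) (map Dirac (map (substN \<theta>) (branches Q)))))"
    using PCh by (simp, intro eqN_eqP.congPCh) auto
  also have "eqP \<dots> (bigopP (branch_probs (PCh p P Q))
      (map Dirac (map (substN \<theta>) (branches (PCh p P Q)))))"
    using PCh.prems
    by (simp, intro eqP_PCh_bigopP) (auto simp: valid_branch_probs length_branch_probs)
  finally show ?case .
qed

section \<open>Standard systems given by tables of right-hand sides\<close>

text \<open>A row \<open>(L, Vs)\<close> stands for the right-hand side
  \<open>\<Sum>(\<alpha>, ps, Xs)\<in>L. \<alpha>.\<Oplus>\<^sub>k ps\<^sub>k Xs\<^sub>k + \<Sum>V\<in>Vs. V\<close> of a standard system.\<close>

type_synonym ('a, 'v) row = "('a act \<times> real list \<times> 'v list) list \<times> 'v list"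
type_synonym ('a, 'v) table = "'v \<Rightarrow> ('a, 'v) row"

definition summand :: "'a act \<times> real list \<times> 'v list \<Rightarrow> ('a, 'v) nexp" where
  "summand = (\<lambda>(\<alpha>, ps, Xs). Pre \<alpha> (bigop ps (map NVar Xs)))"

definition rhs_expr :: "('a, 'v) row \<Rightarrow> ('a, 'v) nexp" where
  "rhs_expr row = sumlist (map summand (fst row) @ map NVar (snd row))"

definition mk_eqsys :: "'v list \<Rightarrow> ('a, 'v) table \<Rightarrow> ('a, 'v) eqsys" where
  "mk_eqsys vs R = map (\<lambda>Z. (Z, rhs_expr (R Z))) vs"

definition wf_summand :: "'v set \<Rightarrow> 'a act \<times> real list \<times> 'v list \<Rightarrow> bool" where
  "wf_summand V = (\<lambda>(\<alpha>, ps, Xs).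
     valid_probs ps \<and> length Xs = length ps \<and> distinct Xs \<and> set Xs \<subseteq> V)"

definition wf_table :: "'v set \<Rightarrow> ('a, 'v) table \<Rightarrow> bool" where
  "wf_table V R \<longleftrightarrow> (\<forall>Z\<in>V. \<forall>l\<in>set (fst (R Z)). wf_summand V l)"

lemma wf_tableD:
  "wf_table V R \<Longrightarrow> Z \<in> V \<Longrightarrow> (\<alpha>, ps, Xs) \<in> set (fst (R Z)) \<Longrightarrow>
    valid_probs ps \<and> length Xs = length ps \<and> distinct Xs \<and> set Xs \<subseteq> V"
  unfolding wf_table_def wf_summand_def by fastforce

lemma substN_summand:
  "substN \<sigma> (summand (\<alpha>, ps, Xs)) = Pre \<alpha> (bigopP ps (map (\<lambda>X. Dirac (\<sigma> X)) Xs))"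
  by (simp add: summand_def bigop_def substP_bigopP comp_def)

lemma fvN_summand: "fvN (summand (\<alpha>, ps, Xs)) \<subseteq> set Xs"
  using fvP_bigopP[of ps "map Dirac (map NVar Xs)"] by (auto simp: summand_def bigop_def)

lemma substN_rhs_expr:
  "substN \<sigma> (rhs_expr row) = sumlist (map (substN \<sigma> \<circ> summand) (fst row) @ map \<sigma> (snd row))"
  by (simp add: rhs_expr_def substN_sumlist comp_def)

lemma fvN_summand_subset: "wf_summand V l \<Longrightarrow> fvN (summand l) \<subseteq> V"
  using fvN_summand by (cases l) (fastforce simp: wf_summand_def)

lemma fvN_rhs_expr:
  "\<forall>l\<in>set (fst row). wf_summand V l \<Longrightarrow> fvN (rhs_expr row) \<subseteq> V \<union> set (snd row)"
  using fvN_summand_subset by (fastforce simp: rhs_expr_def fvN_sumlist)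

lemma formal_mk_eqsys: "formal (mk_eqsys vs R) = set vs"
  by (simp add: formal_def mk_eqsys_def image_image)

definition expect :: "real list \<Rightarrow> 'v list \<Rightarrow> ('v \<Rightarrow> real) \<Rightarrow> real" where
  "expect ps Xs f = (\<Sum>k<length ps. ps ! k * f (Xs ! k))"

lemma expect_cong:
  "length Xs = length ps \<Longrightarrow> (\<And>X. X \<in> set Xs \<Longrightarrow> f X = g X) \<Longrightarrow> expect ps Xs f = expect ps Xs g"
  unfolding expect_def by (intro sum.cong) auto

lemma valid_probs_nth_pos: "valid_probs ps \<Longrightarrow> k < length ps \<Longrightarrow> 0 < ps ! k"
  by (simp add: valid_probs_def)

lemma expect_mono:
  assumes "valid_probs ps" "length Xs = length ps" "\<And>X. X \<in> set Xs \<Longrightarrow> f X \<le> g X"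
  shows "expect ps Xs f \<le> expect ps Xs g"
  unfolding expect_def using assms
  by (intro sum_mono mult_left_mono) (auto simp: less_imp_le valid_probs_nth_pos)

lemma expect_const: "valid_probs ps \<Longrightarrow> expect ps Xs (\<lambda>_. c) = c"
  unfolding expect_def valid_probs_def
  by (simp add: sum_distrib_right[symmetric] sum_list_sum_nth atLeast0LessThan)

lemma expect_less:
  assumes "valid_probs ps" "length Xs = length ps" "\<And>X. X \<in> set Xs \<Longrightarrow> f X \<le> c"
    and "X \<in> set Xs" "f X < c"
  shows "expect ps Xs f < c"
proof -
  obtain j where j: "j < length ps" "Xs ! j = X"
    using assms(2,4) by (metis in_set_conv_nth)
  have "expect ps Xs f < expect ps Xs (\<lambda>_. c)"
    unfolding expect_def
  proof (rule sum_strict_mono_ex1)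
    show "\<forall>k\<in>{..<length ps}. ps ! k * f (Xs ! k) \<le> ps ! k * c"
      using assms(1-3) by (auto intro!: mult_left_mono simp: less_imp_le valid_probs_nth_pos)
    show "\<exists>k\<in>{..<length ps}. ps ! k * f (Xs ! k) < ps ! k * c"
      using j assms(1,5) by (intro bexI[of _ j]) (auto simp: valid_probs_nth_pos)
  qed simp
  then show ?thesis by (simp add: expect_const[OF assms(1)])
qed

definition tau_superharmonic :: "'v set \<Rightarrow> ('a, 'v) table \<Rightarrow> real \<Rightarrow> ('v \<Rightarrow> real) \<Rightarrow> bool" where
  "tau_superharmonic V R c f \<longleftrightarrow>
     (\<forall>Z\<in>V. \<forall>(\<alpha>, ps, Xs)\<in>set (fst (R Z)). \<alpha> = Tau \<longrightarrow> c + expect ps Xs f \<le> f Z)"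

definition tau_ranking :: "'v set \<Rightarrow> ('a, 'v) table \<Rightarrow> ('v \<Rightarrow> real) \<Rightarrow> bool" where
  "tau_ranking V R w \<longleftrightarrow> (\<forall>Z\<in>V. 1 \<le> w Z) \<and> tau_superharmonic V R 1 w"

lemma tau_superharmonicD:
  "tau_superharmonic V R c f \<Longrightarrow> Z \<in> V \<Longrightarrow> (Tau, ps, Xs) \<in> set (fst (R Z)) \<Longrightarrow>
    c + expect ps Xs f \<le> f Z"
  unfolding tau_superharmonic_def by fastforce

lemma tau_superharmonic_Un:
  "tau_superharmonic (V \<union> W) R c f \<longleftrightarrow> tau_superharmonic V R c f \<and> tau_superharmonic W R c f"
  unfolding tau_superharmonic_def by blast

lemma tau_superharmonic_cong:
  assumes "tau_superharmonic V R c f" "wf_table V R"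
    and "\<And>Z. Z \<in> V \<Longrightarrow> R' Z = R Z" "\<And>Z. Z \<in> V \<Longrightarrow> f' Z = f Z"
  shows "tau_superharmonic V R' c f'"
  unfolding tau_superharmonic_def
proof (intro ballI, clarify)
  fix Z ps Xs assume Z: "Z \<in> V" and l: "(Tau, ps, Xs) \<in> set (fst (R' Z))"
  then have l': "(Tau, ps, Xs) \<in> set (fst (R Z))" using assms(3) by simp
  have "expect ps Xs f' = expect ps Xs f"
    using wf_tableD[OF assms(2) Z l'] assms(4) by (intro expect_cong) auto
  then show "c + expect ps Xs f' \<le> f' Z"
    using tau_superharmonicD[OF assms(1) Z l'] assms(4)[OF Z] by simp
qed

lemma tau_superharmonic_min:
  assumes "tau_superharmonic V R c f" "tau_superharmonic V R c g" "wf_table V R"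
  shows "tau_superharmonic V R c (\<lambda>Z. min (f Z) (g Z))"
  unfolding tau_superharmonic_def
proof (intro ballI, clarify)
  fix Z ps Xs assume Z: "Z \<in> V" and l: "(Tau, ps, Xs) \<in> set (fst (R Z))"
  note wf = wf_tableD[OF assms(3) Z l]
  have "expect ps Xs (\<lambda>Z. min (f Z) (g Z)) \<le> expect ps Xs f"
    "expect ps Xs (\<lambda>Z. min (f Z) (g Z)) \<le> expect ps Xs g"
    using wf by (auto intro: expect_mono)
  then show "c + expect ps Xs (\<lambda>Z. min (f Z) (g Z)) \<le> min (f Z) (g Z)"
    using tau_superharmonicD[OF assms(1) Z l] tau_superharmonicD[OF assms(2) Z l] by simp
qed

lemma nstep_sumlist: "nstep (sumlist Es) \<alpha> \<mu> \<Longrightarrow> \<exists>E\<in>set Es. nstep E \<alpha> \<mu>"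
proof (induct Es rule: sumlist.induct)
  case (3 E F Es)
  from "3.prems" have "nstep E \<alpha> \<mu> \<or> nstep (sumlist (F # Es)) \<alpha> \<mu>"
    by (auto elim: nstep.cases)
  then show ?case using "3.hyps" by auto
qed (auto elim: nstep.cases)

inductive_cases pstep_DiracE: "pstep (Dirac E) \<mu>"
inductive_cases pstep_PChE: "pstep (PCh p P Q) \<mu>"

lemma pstep_bigopP_Dirac:
  "valid_probs ps \<Longrightarrow> length Gs = length ps \<Longrightarrow> pstep (bigopP ps (map Dirac Gs)) \<mu> \<Longrightarrow>
    \<mu> = (\<lambda>G. \<Sum>k<length ps. ps ! k * delta (Gs ! k) G)"
proof (induct "length ps" arbitrary: ps Gs \<mu> rule: less_induct)
  case less
  obtain a ps' where ps: "ps = a # ps'"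
    using less.prems(1) by (cases ps) (auto simp: valid_probs_def)
  obtain G1 Gs' where Gs: "Gs = G1 # Gs'"
    using less.prems(2) ps by (cases Gs) auto
  show ?case
  proof (cases ps')
    case Nil
    then have "a = 1" "Gs' = []"
      using less.prems(1,2) ps Gs by (simp_all add: valid_probs_def)
    moreover have "pstep (Dirac G1) \<mu>"
      using less.prems(3) ps Gs Nil \<open>Gs' = []\<close> by simp
    ultimately show ?thesis
      by (auto simp: ps Gs Nil elim: pstep_DiracE)
  next
    case (Cons b ps'')
    define ps1 where "ps1 = map (\<lambda>r. r / (1 - a)) ps'"
    have a1: "a < 1" and vt: "valid_probs ps1"
      using valid_probs_ConsD less.prems(1) unfolding ps Cons ps1_def by blast+
    obtain G2 Gs'' where Gs': "Gs' = G2 # Gs''"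
      using less.prems(2) ps Gs Cons by (cases Gs') auto
    have "pstep (PCh a (Dirac G1) (bigopP ps1 (map Dirac Gs'))) \<mu>"
      using less.prems(3) by (simp add: ps Cons Gs Gs' ps1_def)
    then obtain \<mu>2 where m2: "pstep (bigopP ps1 (map Dirac Gs')) \<mu>2"
      and mu: "\<mu> = (\<lambda>G. a * delta G1 G + (1 - a) * \<mu>2 G)"
      by (auto elim!: pstep_PChE pstep_DiracE)
    have mu2: "\<mu>2 = (\<lambda>G. \<Sum>k<length ps1. ps1 ! k * delta (Gs' ! k) G)"
      by (rule less.hyps[OF _ vt _ m2]) (use less.prems(2) ps Gs in \<open>auto simp: ps1_def\<close>)
    have "(1 - a) * \<mu>2 G = (\<Sum>k<length ps'. ps' ! k * delta (Gs' ! k) G)" for G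
      unfolding mu2 sum_distrib_left using a1 by (intro sum.cong) (auto simp: ps1_def)
    then show ?thesis
      unfolding mu ps Gs length_Cons sum.lessThan_Suc_shift by simp
  qed
qed

lemma std_step_mk_eqsys:
  assumes "std_step (mk_eqsys vs R) Z \<alpha> \<nu>" and "wf_table (set vs) R"
  obtains ps Xs where "Z \<in> set vs" "(\<alpha>, ps, Xs) \<in> set (fst (R Z))"
    and "\<nu> = (\<lambda>Y. \<Sum>k<length ps. ps ! k * delta (Xs ! k) Y)"
proof -
  obtain \<mu> where Z: "Z \<in> set vs" and st: "nstep (rhs_expr (R Z)) \<alpha> \<mu>"
    and \<nu>: "\<nu> = (\<lambda>Y. \<mu> (NVar Y))"
    using assms(1) unfolding std_step_def mk_eqsys_def by auto
  obtain E where "E \<in> set (map summand (fst (R Z)) @ map NVar (snd (R Z)))" "nstep E \<alpha> \<mu>"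
    using nstep_sumlist st unfolding rhs_expr_def by blast
  then obtain \<beta> ps Xs where l: "(\<beta>, ps, Xs) \<in> set (fst (R Z))"
    and "nstep (Pre \<beta> (bigop ps (map NVar Xs))) \<alpha> \<mu>"
    by (auto simp: summand_def elim: nstep.cases)
  then have "\<beta> = \<alpha>" and "pstep (bigopP ps (map Dirac (map NVar Xs))) \<mu>"
    by (auto simp: bigop_def elim: nstep.cases)
  moreover note wf_tableD[OF assms(2) Z l]
  ultimately have \<mu>: "\<mu> = (\<lambda>G. \<Sum>k<length ps. ps ! k * delta (map NVar Xs ! k) G)"
    by (intro pstep_bigopP_Dirac) auto
  have "\<nu> Y = (\<Sum>k<length ps. ps ! k * delta (Xs ! k) Y)" for Y
    using wf_tableD[OF assms(2) Z l] by (auto simp: \<nu> \<mu> delta_def intro!: sum.cong)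
  then show thesis
    using that Z l \<open>\<beta> = \<alpha>\<close> by blast
qed

definition weight :: "'v set \<Rightarrow> ('v \<Rightarrow> real) \<Rightarrow> ('v \<Rightarrow> real) \<Rightarrow> real" where
  "weight V w \<mu> = (\<Sum>Y\<in>V. \<mu> Y * w Y)"

lemma weight_add: "weight V w (\<lambda>Y. \<mu> Y + \<nu> Y) = weight V w \<mu> + weight V w \<nu>"
  by (simp add: weight_def sum.distrib algebra_simps)

lemma weight_sum: "weight V w (\<lambda>Y. \<Sum>i\<in>I. c i * \<mu> i Y) = (\<Sum>i\<in>I. c i * weight V w (\<mu> i))"
  unfolding weight_def sum_distrib_left sum_distrib_right
  by (subst sum.swap) (simp add: mult.assoc)

lemma weight_delta:
  assumes "finite V" "X \<in> V"
  shows "weight V w (delta X) = w X"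
proof -
  have "weight V w (delta X) = (\<Sum>Y\<in>V. if Y = X then w Y else 0)"
    unfolding weight_def by (rule sum.cong) (auto simp: delta_def)
  then show ?thesis using assms by simp
qed

lemma weight_nonneg: "(\<And>Y. Y \<in> V \<Longrightarrow> 0 \<le> \<mu> Y \<and> 0 \<le> w Y) \<Longrightarrow> 0 \<le> weight V w \<mu>"
  unfolding weight_def by (intro sum_nonneg) auto

lemma weight_distribution:
  assumes "finite V" "set Xs \<subseteq> V" "length Xs = length ps"
  shows "weight V w (\<lambda>Y. \<Sum>k<length ps. ps ! k * delta (Xs ! k) Y) = expect ps Xs w"
  unfolding weight_sum expect_def using assms
  by (intro sum.cong) (auto simp: weight_delta subset_iff)

lemma cstep_weight:
  assumes wf: "wf_table (set vs) R" and w: "tau_ranking (set vs) R w"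
    and cs: "cstep (mk_eqsys vs R) \<mu> Tau \<nu>"
  shows "weight (set vs) w \<nu> + weight (set vs) (\<lambda>_. 1) \<mu> \<le> weight (set vs) w \<mu>"
proof -
  obtain m c s \<nu>' where h: "\<forall>i<(m::nat). 0 \<le> c i \<and> std_step (mk_eqsys vs R) (s i) Tau (\<nu>' i)"
    and \<mu>: "\<mu> = (\<lambda>Y. \<Sum>i<m. c i * delta (s i) Y)" and \<nu>: "\<nu> = (\<lambda>Y. \<Sum>i<m. c i * \<nu>' i Y)"
    using cs unfolding cstep_def by blast
  have step: "s i \<in> set vs \<and> 1 + weight (set vs) w (\<nu>' i) \<le> w (s i)" if "i < m" for i
  proof -
    have "std_step (mk_eqsys vs R) (s i) Tau (\<nu>' i)"
      using h that by blast
    then obtain ps Xs where Z: "s i \<in> set vs" and l: "(Tau, ps, Xs) \<in> set (fst (R (s i)))"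
      and \<nu>': "\<nu>' i = (\<lambda>Y. \<Sum>k<length ps. ps ! k * delta (Xs ! k) Y)"
      by (rule std_step_mk_eqsys[OF _ wf])
    have "weight (set vs) w (\<nu>' i) = expect ps Xs w"
      using wf_tableD[OF wf Z l] by (simp add: \<nu>' weight_distribution)
    moreover have "1 + expect ps Xs w \<le> w (s i)"
      using w Z l by (auto simp: tau_ranking_def dest: tau_superharmonicD)
    ultimately show ?thesis using Z by simp
  qed
  have W\<mu>: "weight (set vs) f \<mu> = (\<Sum>i<m. c i * f (s i))" for f
    unfolding \<mu> weight_sum by (intro sum.cong refl) (simp add: weight_delta step)
  have "weight (set vs) w \<nu> + weight (set vs) (\<lambda>_. 1) \<mu>
      = (\<Sum>i<m. c i * (1 + weight (set vs) w (\<nu>' i)))"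
    by (simp add: \<nu> weight_sum W\<mu> distrib_left sum.distrib)
  also have "\<dots> \<le> (\<Sum>i<m. c i * w (s i))"
    using step h by (intro sum_mono mult_left_mono) auto
  finally show ?thesis by (simp add: W\<mu>)
qed

lemma weak_weight:
  fixes vs :: "'v list" and R :: "('a, 'v) table"
  assumes wf: "wf_table (set vs) R" and w: "tau_ranking (set vs) R w"
    and wk: "weak (mk_eqsys vs R) \<mu> \<nu>"
  shows "weight (set vs) w \<nu> \<le> weight (set vs) w \<mu>" and "\<forall>Y. 0 \<le> \<nu> Y"
proof -
  obtain mt mx :: "nat \<Rightarrow> 'v \<Rightarrow> real" where nn: "\<forall>i Y. 0 \<le> mt i Y \<and> 0 \<le> mx i Y"
    and cs: "\<forall>i. cstep (mk_eqsys vs R) (mt i) Tau (\<lambda>Y. mt (Suc i) Y + mx (Suc i) Y)"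
    and \<mu>: "\<mu> = (\<lambda>Y. mt 0 Y + mx 0 Y)" and sums: "\<forall>Y. (\<lambda>i. mx i Y) sums \<nu> Y"
    using wk unfolding weak_def by blast
  let ?W = "weight (set vs) w"
  have w0: "\<And>Y. Y \<in> set vs \<Longrightarrow> 0 \<le> w Y"
    using w unfolding tau_ranking_def by force
  have W0: "0 \<le> ?W f" if "\<forall>Y. 0 \<le> f Y" for f
    using that w0 by (intro weight_nonneg) auto
  have partial: "(\<Sum>j<Suc n. ?W (mx j)) + ?W (mt n) \<le> ?W \<mu>" for n
  proof (induct n)
    case (Suc n)
    have "?W (\<lambda>Y. mt (Suc n) Y + mx (Suc n) Y) + weight (set vs) (\<lambda>_. 1) (mt n) \<le> ?W (mt n)"
      using cstep_weight[OF wf w] cs by blast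
    moreover have "0 \<le> weight (set vs) (\<lambda>_. 1) (mt n)"
      using nn by (intro weight_nonneg) auto
    ultimately have "?W (mt (Suc n)) + ?W (mx (Suc n)) \<le> ?W (mt n)"
      by (simp add: weight_add)
    then show ?case using Suc by simp
  qed (simp add: \<mu> weight_add)
  have "(\<lambda>j. ?W (mx j)) sums ?W \<nu>"
    unfolding weight_def by (intro sums_sum sums_mult2) (use sums in auto)
  moreover have bound: "(\<Sum>j<n. ?W (mx j)) \<le> ?W \<mu>" for n
  proof -
    have "(\<Sum>j<n. ?W (mx j)) \<le> (\<Sum>j<Suc n. ?W (mx j)) + ?W (mt n)"
      using W0 nn by simp
    then show ?thesis using partial[of n] by linarith
  qed
  ultimately show "?W \<nu> \<le> ?W \<mu>"
    unfolding sums_def by (intro LIMSEQ_le_const2[of _ "?W \<nu>"]) auto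
  show "\<forall>Y. 0 \<le> \<nu> Y"
  proof
    fix Y
    have "(\<lambda>n. \<Sum>j<n. mx j Y) \<longlonglongrightarrow> \<nu> Y" using sums unfolding sums_def by blast
    then show "0 \<le> \<nu> Y" by (rule LIMSEQ_le_const) (use nn in \<open>auto intro: sum_nonneg\<close>)
  qed
qed

text \<open>The weight of a state cannot return to itself along a weak \<open>\<tau>\<close>-transition, since every
  \<open>\<tau>\<close>-step strictly decreases it by the probability mass that performs the step.\<close>

lemma guarded_mk_eqsys:
  assumes wf: "wf_table (set vs) R" and w: "tau_ranking (set vs) R w"
  shows "guarded_sys (mk_eqsys vs R)"
  unfolding guarded_sys_def formal_mk_eqsys
proof
  assume "\<exists>X\<in>set vs. weak_act (mk_eqsys vs R) (delta X) Tau (delta X)"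
  then obtain X \<mu>1 \<mu>2 where X: "X \<in> set vs" and w1: "weak (mk_eqsys vs R) (delta X) \<mu>1"
    and c: "cstep (mk_eqsys vs R) \<mu>1 Tau \<mu>2" and w2: "weak (mk_eqsys vs R) \<mu>2 (delta X)"
    unfolding weak_act_def by blast
  let ?W = "weight (set vs) w"
  have nn: "\<forall>Y. 0 \<le> \<mu>1 Y"
    using weak_weight(2)[OF wf w w1] .
  have step: "?W \<mu>2 + weight (set vs) (\<lambda>_. 1) \<mu>1 \<le> ?W \<mu>1"
    by (rule cstep_weight[OF wf w c])
  have "?W \<mu>1 \<le> w X" "w X \<le> ?W \<mu>2"
    using weak_weight(1)[OF wf w w1] weak_weight(1)[OF wf w w2] weight_delta[OF _ X] by auto
  moreover have mass: "0 \<le> weight (set vs) (\<lambda>_. 1) \<mu>1"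
    using nn by (intro weight_nonneg) auto
  ultimately have "(\<Sum>Y\<in>set vs. \<mu>1 Y) = 0"
    using step by (simp add: weight_def)
  then have "\<forall>Y\<in>set vs. \<mu>1 Y = 0"
    using nn by (simp add: sum_nonneg_eq_0_iff)
  then have "?W \<mu>1 = 0"
    by (simp add: weight_def)
  moreover have "1 \<le> w X"
    using w X unfolding tau_ranking_def by blast
  ultimately show False
    using step mass \<open>w X \<le> ?W \<mu>2\<close> by linarith
qed

section \<open>Representing expressions by standard systems\<close>

definition unguarded_in :: "('a, 'v) nexp \<Rightarrow> 'v set \<Rightarrow> bool" where
  "unguarded_in G U \<longleftrightarrow> (\<exists>V\<subseteq>U. ugN G V)"

text \<open>A hitting bound dominates the probability of reaching, by \<open>\<tau>\<close>-steps, a state with a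
  variable summand in \<open>U\<close>.\<close>

definition hit_bound :: "'v set \<Rightarrow> ('a, 'v) table \<Rightarrow> 'v set \<Rightarrow> ('v \<Rightarrow> real) \<Rightarrow> bool" where
  "hit_bound V R U h \<longleftrightarrow> (\<forall>Z\<in>V. 0 \<le> h Z \<and> h Z \<le> 1) \<and>
     (\<forall>Z\<in>V. set (snd (R Z)) \<inter> U \<noteq> {} \<longrightarrow> h Z = 1) \<and> tau_superharmonic V R 0 h"

definition root_of :: "'v set \<Rightarrow> ('a, 'v) table \<Rightarrow> ('a, 'v) nexp \<Rightarrow> 'v \<Rightarrow> bool" where
  "root_of V R G r \<longleftrightarrow> r \<in> V \<and> (\<forall>v\<in>set (snd (R r)). ugN G {v}) \<and>
     (\<forall>U. \<not> unguarded_in G U \<longrightarrow> (\<exists>h. hit_bound V R U h \<and> h r < 1))"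

definition solves :: "'v set \<Rightarrow> ('a, 'v) table \<Rightarrow> ('v \<Rightarrow> ('a, 'v) nexp) \<Rightarrow>
    ('v \<Rightarrow> ('a, 'v) nexp) \<Rightarrow> bool" where
  "solves V R \<theta> Es \<longleftrightarrow>
     (\<forall>Z\<in>V. eqN (Es Z) (substN (\<lambda>Y. if Y \<in> V then Es Y else \<theta> Y) (rhs_expr (R Z))))"

text \<open>Solutions are required for every instantiation \<open>\<theta>\<close> of the free variables because the
  case of \<open>rec X. E\<close> instantiates \<open>X\<close> by the solution itself.\<close>

definition represents :: "('a, 'v) nexp list \<Rightarrow> 'v set \<Rightarrow> 'v set \<Rightarrow> ('a, 'v) table \<Rightarrow>
    'v list \<Rightarrow> bool" where
  "represents Gs A V R rs \<longleftrightarrow>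
     finite V \<and> distinct rs \<and> wf_table V R \<and> (\<exists>w. tau_ranking V R w) \<and>
     V \<inter> (A \<union> (\<Union>G\<in>set Gs. fvN G)) = {} \<and>
     (\<forall>Z\<in>V. set (snd (R Z)) \<subseteq> (\<Union>G\<in>set Gs. fvN G)) \<and>
     list_all2 (root_of V R) Gs rs \<and>
     (\<forall>\<theta>. \<exists>Es. solves V R \<theta> Es \<and> list_all2 (\<lambda>G r. Es r = substN \<theta> G) Gs rs)"

lemma wf_summand_mono: "wf_summand V l \<Longrightarrow> V \<subseteq> W \<Longrightarrow> wf_summand W l"
  by (auto simp: wf_summand_def)

lemma roots_subset: "list_all2 (root_of V R) Gs rs \<Longrightarrow> set rs \<subseteq> V"
  by (induct rule: list_all2_induct) (auto simp: root_of_def)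

lemma hit_bound_one: "wf_table V R \<Longrightarrow> hit_bound V R U (\<lambda>_. 1)"
  by (auto simp: hit_bound_def tau_superharmonic_def expect_const dest: wf_tableD)

lemma hit_bound_min:
  assumes "hit_bound V R U h1" "hit_bound V R U h2" "wf_table V R"
  shows "hit_bound V R U (\<lambda>Z. min (h1 Z) (h2 Z))"
proof -
  have "tau_superharmonic V R 0 (\<lambda>Z. min (h1 Z) (h2 Z))"
    using assms by (intro tau_superharmonic_min) (simp_all add: hit_bound_def)
  then show ?thesis
    using assms(1,2) unfolding hit_bound_def by (simp add: min_def)
qed

lemma hit_bound_embed:
  assumes h: "hit_bound V R U h" and "V \<subseteq> V'" and R': "\<And>Z. Z \<in> V \<Longrightarrow> R' Z = R Z"
    and wf: "wf_table V R" and wf': "wf_table V' R'"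
  shows "hit_bound V' R' U (\<lambda>Z. if Z \<in> V then h Z else 1)"
proof -
  let ?h = "\<lambda>Z. if Z \<in> V then h Z else 1"
  have h01: "\<And>Z. Z \<in> V \<Longrightarrow> 0 \<le> h Z \<and> h Z \<le> 1" and hU: "tau_superharmonic V R 0 h"
    and h1: "\<And>Z. Z \<in> V \<Longrightarrow> set (snd (R Z)) \<inter> U \<noteq> {} \<Longrightarrow> h Z = 1"
    using h by (auto simp: hit_bound_def)
  have "tau_superharmonic V R' 0 ?h"
    by (rule tau_superharmonic_cong[OF hU wf R']) simp_all
  moreover have "tau_superharmonic (V' - V) R' 0 ?h"
    unfolding tau_superharmonic_def
  proof (intro ballI, clarify)
    fix Z ps Xs assume Z: "Z \<in> V'" "Z \<notin> V" and l: "(Tau, ps, Xs) \<in> set (fst (R' Z))"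
    have wfl: "valid_probs ps" "length Xs = length ps"
      using wf_tableD[OF wf' Z(1) l] by auto
    have "expect ps Xs ?h \<le> expect ps Xs (\<lambda>_. 1)"
      using h01 wfl by (intro expect_mono) auto
    then show "0 + expect ps Xs ?h \<le> ?h Z"
      using wfl Z by (simp add: expect_const)
  qed
  ultimately have "tau_superharmonic V' R' 0 ?h"
    using tau_superharmonic_Un[of V "V' - V" R' 0 ?h] \<open>V \<subseteq> V'\<close> by (simp add: Un_absorb1)
  then show ?thesis
    using h01 h1 R' unfolding hit_bound_def by auto
qed

lemma root_of_embed:
  assumes "root_of V R G r" "V \<subseteq> V'" "\<And>Z. Z \<in> V \<Longrightarrow> R' Z = R Z"
    and "wf_table V R" "wf_table V' R'"
  shows "root_of V' R' G r"
proof -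
  have "\<exists>h. hit_bound V' R' U h \<and> h r < 1" if ng: "\<not> unguarded_in G U" for U
  proof -
    obtain h where "hit_bound V R U h" "h r < 1"
      using assms(1) ng by (auto simp: root_of_def)
    moreover have "r \<in> V"
      using assms(1) by (simp add: root_of_def)
    ultimately show ?thesis
      using hit_bound_embed[OF _ assms(2-5)] by (intro exI[of _ "\<lambda>Z. if Z \<in> V then h Z else 1"]) auto
  qed
  then show ?thesis using assms by (auto simp: root_of_def)
qed

lemma substN_rhs_expr_cong:
  assumes "wf_table V R" "Z \<in> V" "\<And>Y. Y \<in> V \<union> set (snd (R Z)) \<Longrightarrow> \<sigma> Y = \<sigma>' Y"
  shows "substN \<sigma> (rhs_expr (R Z)) = substN \<sigma>' (rhs_expr (R Z))"
  using assms fvN_rhs_expr[of "R Z" V] by (intro subst_cong) (auto simp: wf_table_def)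

lemma eqN_subst_summand_cong:
  assumes "\<And>X. X \<in> set Xs \<Longrightarrow> eqN (\<sigma> X) (\<sigma>' X)"
  shows "eqN (substN \<sigma> (summand (\<alpha>, ps, Xs))) (substN \<sigma>' (summand (\<alpha>, ps, Xs)))"
  unfolding substN_summand
  by (intro eqN_eqP.congPre eqP_bigopP_cong)
    (auto simp: list_all2_map1 list_all2_map2 intro!: list.rel_refl_strong eqN_eqP.congDirac assms)

lemma eqN_subst_rhs_expr_cong:
  assumes "\<forall>l\<in>set (fst row). wf_summand V l"
    and "\<And>Y. Y \<in> V \<union> set (snd row) \<Longrightarrow> eqN (\<sigma> Y) (\<sigma>' Y)"
  shows "eqN (substN \<sigma> (rhs_expr row)) (substN \<sigma>' (rhs_expr row))"
  unfolding substN_rhs_expr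
proof (intro eqN_sumlist_cong list_all2_appendI)
  show "list_all2 eqN (map (substN \<sigma> \<circ> summand) (fst row)) (map (substN \<sigma>' \<circ> summand) (fst row))"
    unfolding list_all2_map1 list_all2_map2
  proof (rule list.rel_refl_strong)
    fix l assume l: "l \<in> set (fst row)"
    obtain \<alpha> ps Xs where l': "l = (\<alpha>, ps, Xs)" by (cases l) auto
    then have "set Xs \<subseteq> V"
      using assms(1) l by (auto simp: wf_summand_def)
    then show "eqN ((substN \<sigma> \<circ> summand) l) ((substN \<sigma>' \<circ> summand) l)"
      unfolding l' comp_def by (intro eqN_subst_summand_cong assms(2)) auto
  qed
  show "list_all2 eqN (map \<sigma> (snd row)) (map \<sigma>' (snd row))"
    using assms(2) by (auto simp: list_all2_map1 list_all2_map2 intro!: list.rel_refl_strong)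
qed

lemma list_all2_roots_map:
  "list_all2 (\<lambda>G r. Es r = substN \<theta> G) Gs rs \<Longrightarrow> map Es rs = map (substN \<theta>) Gs"
  by (induct rule: list_all2_induct) auto

lemma wf_table_update:
  "wf_table V R \<Longrightarrow> \<forall>l\<in>set L. wf_summand V l \<Longrightarrow> wf_table (insert X V) (R(X := (L, Vs)))"
  by (auto simp: wf_table_def intro: wf_summand_mono)

lemma tau_superharmonic_update:
  assumes f: "tau_superharmonic V R c f" and wf: "wf_table V R" and X: "X \<notin> V"
    and L: "\<forall>l\<in>set L. wf_summand V l"
    and d: "\<forall>(\<alpha>, ps, Xs)\<in>set L. \<alpha> = Tau \<longrightarrow> c + expect ps Xs f \<le> d"
  shows "tau_superharmonic (insert X V) (R(X := (L, Vs))) c (f(X := d))"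
proof -
  have "tau_superharmonic V (R(X := (L, Vs))) c (f(X := d))"
    using X by (intro tau_superharmonic_cong[OF f wf]) auto
  moreover have "c + expect ps Xs (f(X := d)) \<le> d" if "(Tau, ps, Xs) \<in> set L" for ps Xs
  proof -
    have "length Xs = length ps" "set Xs \<subseteq> V"
      using L that by (auto simp: wf_summand_def)
    then have "expect ps Xs (f(X := d)) = expect ps Xs f"
      using X by (intro expect_cong) auto
    then show ?thesis using d that by auto
  qed
  ultimately show ?thesis
    using tau_superharmonic_Un[of "{X}" V] by (auto simp: tau_superharmonic_def)
qed

lemma tau_ranking_update:
  assumes "tau_ranking V R w" "wf_table V R" "X \<notin> V" "\<forall>l\<in>set L. wf_summand V l"
  shows "\<exists>w'. tau_ranking (insert X V) (R(X := (L, Vs))) w'"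
proof -
  define d where "d = Max (insert 1 ((\<lambda>(\<alpha>, ps, Xs). 1 + expect ps Xs w) ` set L))"
  have "1 \<le> d" and "\<forall>(\<alpha>, ps, Xs)\<in>set L. \<alpha> = Tau \<longrightarrow> 1 + expect ps Xs w \<le> d"
    unfolding d_def by (auto intro!: Max_ge insertI2 rev_image_eqI)
  then have "tau_ranking (insert X V) (R(X := (L, Vs))) (w(X := d))"
    using assms tau_superharmonic_update[of V R 1 w] by (auto simp: tau_ranking_def)
  then show ?thesis by blast
qed

lemma hit_bound_update:
  assumes h: "hit_bound V R U h" and wf: "wf_table V R" and X: "X \<notin> V"
    and L: "\<forall>l\<in>set L. wf_summand V l" and Vs: "set Vs \<inter> U = {}"
    and less: "\<forall>(\<alpha>, ps, Xs)\<in>set L. \<alpha> = Tau \<longrightarrow> expect ps Xs h < 1"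
  shows "\<exists>h'. hit_bound (insert X V) (R(X := (L, Vs))) U h' \<and> h' X < 1"
proof -
  define D where "D = insert 0 ((\<lambda>(\<alpha>, ps, Xs). expect ps Xs h) ` {l \<in> set L. fst l = Tau})"
  have "finite D" "0 \<in> D" unfolding D_def by auto
  then have d0: "0 \<le> Max D" and d1: "Max D < 1"
    using less by (auto simp: D_def Max_less_iff)
  have "\<forall>(\<alpha>, ps, Xs)\<in>set L. \<alpha> = Tau \<longrightarrow> 0 + expect ps Xs h \<le> Max D"
    using \<open>finite D\<close> unfolding D_def by (auto intro!: Max_ge insertI2 rev_image_eqI)
  then have "tau_superharmonic (insert X V) (R(X := (L, Vs))) 0 (h(X := Max D))"
    using h wf X L by (intro tau_superharmonic_update) (auto simp: hit_bound_def)
  then have "hit_bound (insert X V) (R(X := (L, Vs))) U (h(X := Max D))"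
    using h X Vs d0 d1 by (auto simp: hit_bound_def)
  then show ?thesis using d1 by auto
qed

lemma solves_update:
  assumes sol: "solves V R \<theta> Es" and wf: "wf_table V R" and X: "X \<notin> V" "X \<notin> set Vs"
    and L: "\<forall>l\<in>set L. wf_summand V l" and nX: "\<forall>Z\<in>V. X \<notin> set (snd (R Z))"
    and E: "eqN E (substN (\<lambda>Y. if Y \<in> V then Es Y else \<theta> Y) (rhs_expr (L, Vs)))"
  shows "solves (insert X V) (R(X := (L, Vs))) \<theta> (Es(X := E))"
  unfolding solves_def
proof
  let ?\<sigma> = "\<lambda>Y. if Y \<in> V then Es Y else \<theta> Y"
  let ?\<sigma>' = "\<lambda>Y. if Y \<in> insert X V then (Es(X := E)) Y else \<theta> Y"
  fix Z assume Z: "Z \<in> insert X V"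
  show "eqN ((Es(X := E)) Z) (substN ?\<sigma>' (rhs_expr ((R(X := (L, Vs))) Z)))"
  proof (cases "Z = X")
    case True
    have "substN ?\<sigma>' (rhs_expr (L, Vs)) = substN ?\<sigma> (rhs_expr (L, Vs))"
      using fvN_rhs_expr[of "(L, Vs)" V] L X by (intro subst_cong) auto
    then show ?thesis using True E by simp
  next
    case False
    then have "Z \<in> V" using Z by simp
    have "substN ?\<sigma>' (rhs_expr (R Z)) = substN ?\<sigma> (rhs_expr (R Z))"
      using X nX \<open>Z \<in> V\<close> by (intro substN_rhs_expr_cong[OF wf]) auto
    then show ?thesis
      using sol \<open>Z \<in> V\<close> False by (simp add: solves_def)
  qed
qed

lemma representsD:
  assumes "represents Gs A V R rs"
  shows "finite V" "distinct rs" "wf_table V R" "\<exists>w. tau_ranking V R w"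
    and "V \<inter> A = {}" "V \<inter> (\<Union>G\<in>set Gs. fvN G) = {}"
    and "\<forall>Z\<in>V. set (snd (R Z)) \<subseteq> (\<Union>G\<in>set Gs. fvN G)"
    and "list_all2 (root_of V R) Gs rs"
    and "\<forall>\<theta>. \<exists>Es. solves V R \<theta> Es \<and> list_all2 (\<lambda>G r. Es r = substN \<theta> G) Gs rs"
  using assms unfolding represents_def by auto

lemma represents_Nil: "represents [] A {} R []"
  by (auto simp: represents_def wf_table_def tau_ranking_def tau_superharmonic_def solves_def)

lemma represents_antimono: "represents Gs A V R rs \<Longrightarrow> A' \<subseteq> A \<Longrightarrow> represents Gs A' V R rs"
  unfolding represents_def by blast

lemma represents_update:
  assumes rep: "represents Gs A V R rs"
    and X: "X \<notin> V" "X \<notin> A" "X \<notin> fvN G"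
    and fv: "(\<Union>G'\<in>set Gs. fvN G') \<subseteq> fvN G" "V \<inter> fvN G = {}"
    and L: "\<forall>l\<in>set L. wf_summand V l"
    and Vs: "\<forall>v\<in>set Vs. v \<in> fvN G \<and> ugN G {v}"
    and hit: "\<And>U. \<not> unguarded_in G U \<Longrightarrow>
      \<exists>h. hit_bound V R U h \<and> (\<forall>(\<alpha>, ps, Xs)\<in>set L. \<alpha> = Tau \<longrightarrow> expect ps Xs h < 1)"
    and sol: "\<And>\<theta> Es. solves V R \<theta> Es \<Longrightarrow> list_all2 (\<lambda>G r. Es r = substN \<theta> G) Gs rs \<Longrightarrow>
      eqN (substN \<theta> G) (substN (\<lambda>Y. if Y \<in> V then Es Y else \<theta> Y) (rhs_expr (L, Vs)))"
  shows "represents [G] A (insert X V) (R(X := (L, Vs))) [X]"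
proof -
  let ?R = "R(X := (L, Vs))"
  have wf: "wf_table V R" and fin: "finite V" and disj: "V \<inter> A = {}"
    using rep by (auto simp: represents_def)
  have row: "\<forall>Z\<in>V. set (snd (R Z)) \<subseteq> fvN G"
    using rep fv(1) unfolding represents_def by blast
  obtain w where "tau_ranking V R w"
    using rep by (auto simp: represents_def)
  then have ranking: "\<exists>w. tau_ranking (insert X V) ?R w"
    using wf X L by (intro tau_ranking_update) auto
  have "\<exists>h. hit_bound (insert X V) ?R U h \<and> h X < 1" if ng: "\<not> unguarded_in G U" for U
  proof -
    obtain h where "hit_bound V R U h" "\<forall>(\<alpha>, ps, Xs)\<in>set L. \<alpha> = Tau \<longrightarrow> expect ps Xs h < 1"
      using hit[OF ng] by blast
    moreover have "set Vs \<inter> U = {}"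
      using Vs ng by (auto simp: unguarded_in_def)
    ultimately show ?thesis
      using wf X L by (intro hit_bound_update) auto
  qed
  then have root: "root_of (insert X V) ?R G X"
    using Vs by (simp add: root_of_def)
  have "\<exists>Es. solves (insert X V) ?R \<theta> Es \<and> list_all2 (\<lambda>G r. Es r = substN \<theta> G) [G] [X]" for \<theta>
  proof -
    obtain Es where "solves V R \<theta> Es" "list_all2 (\<lambda>G r. Es r = substN \<theta> G) Gs rs"
      using rep unfolding represents_def by blast
    then have "solves (insert X V) ?R \<theta> (Es(X := substN \<theta> G))"
      using wf X L row Vs by (intro solves_update sol) auto
    then show ?thesis by auto
  qed
  then show ?thesis
    using fin wf L ranking X disj fv row Vs root
    by (auto simp: represents_def intro: wf_table_update)
qed

lemma represents_rows_disjoint: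
  assumes "represents Gs A V R rs" "W \<inter> (\<Union>G\<in>set Gs. fvN G) = {}"
  shows "\<forall>Z\<in>V. set (snd (R Z)) \<inter> (V \<union> W) = {}"
proof
  fix Z assume "Z \<in> V"
  then have "set (snd (R Z)) \<subseteq> (\<Union>G\<in>set Gs. fvN G)"
    using representsD(7)[OF assms(1)] by blast
  then show "set (snd (R Z)) \<inter> (V \<union> W) = {}"
    using representsD(6)[OF assms(1)] assms(2) by blast
qed

lemma wf_table_merge:
  assumes "wf_table V1 R1" "wf_table V2 R2"
  shows "wf_table (V1 \<union> V2) (\<lambda>Z. if Z \<in> V1 then R1 Z else R2 Z)"
  unfolding wf_table_def
proof (intro ballI)
  fix Z l assume "Z \<in> V1 \<union> V2" "l \<in> set (fst (if Z \<in> V1 then R1 Z else R2 Z))"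
  then have "wf_summand V1 l \<or> wf_summand V2 l"
    using assms by (auto simp: wf_table_def split: if_splits)
  then show "wf_summand (V1 \<union> V2) l"
    by (auto intro: wf_summand_mono)
qed

lemma tau_ranking_merge:
  assumes w1: "tau_ranking V1 R1 w1" and w2: "tau_ranking V2 R2 w2"
    and wf1: "wf_table V1 R1" and wf2: "wf_table V2 R2" and disj: "V1 \<inter> V2 = {}"
  shows "tau_ranking (V1 \<union> V2) (\<lambda>Z. if Z \<in> V1 then R1 Z else R2 Z)
    (\<lambda>Z. if Z \<in> V1 then w1 Z else w2 Z)"
proof -
  let ?R = "\<lambda>Z. if Z \<in> V1 then R1 Z else R2 Z" and ?w = "\<lambda>Z. if Z \<in> V1 then w1 Z else w2 Z"
  have "tau_superharmonic V1 ?R 1 ?w"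
    by (rule tau_superharmonic_cong[of V1 R1 1 w1]) (use w1 wf1 in \<open>simp_all add: tau_ranking_def\<close>)
  moreover have "tau_superharmonic V2 ?R 1 ?w"
    by (rule tau_superharmonic_cong[of V2 R2 1 w2]) (use w2 wf2 disj in \<open>auto simp: tau_ranking_def\<close>)
  ultimately show ?thesis
    using w1 w2 by (auto simp: tau_ranking_def tau_superharmonic_Un)
qed

lemma solves_merge:
  assumes s1: "solves V1 R1 \<theta> Es1" and s2: "solves V2 R2 \<theta> Es2"
    and wf1: "wf_table V1 R1" and wf2: "wf_table V2 R2" and disj: "V1 \<inter> V2 = {}"
    and row1: "\<forall>Z\<in>V1. set (snd (R1 Z)) \<inter> (V1 \<union> V2) = {}"
    and row2: "\<forall>Z\<in>V2. set (snd (R2 Z)) \<inter> (V1 \<union> V2) = {}"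
  shows "solves (V1 \<union> V2) (\<lambda>Z. if Z \<in> V1 then R1 Z else R2 Z) \<theta>
    (\<lambda>Z. if Z \<in> V1 then Es1 Z else Es2 Z)"
  unfolding solves_def
proof
  let ?Es = "\<lambda>Z. if Z \<in> V1 then Es1 Z else Es2 Z"
  let ?\<sigma> = "\<lambda>Y. if Y \<in> V1 \<union> V2 then ?Es Y else \<theta> Y"
  fix Z assume "Z \<in> V1 \<union> V2"
  then consider (left) "Z \<in> V1" | (right) "Z \<in> V2" "Z \<notin> V1" by blast
  then show "eqN (?Es Z) (substN ?\<sigma> (rhs_expr (if Z \<in> V1 then R1 Z else R2 Z)))"
  proof cases
    case left
    have "substN ?\<sigma> (rhs_expr (R1 Z)) = substN (\<lambda>Y. if Y \<in> V1 then Es1 Y else \<theta> Y) (rhs_expr (R1 Z))"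
      by (rule substN_rhs_expr_cong[OF wf1 left]) (use row1 left in auto)
    then show ?thesis
      using s1 left by (simp add: solves_def)
  next
    case right
    have "substN ?\<sigma> (rhs_expr (R2 Z)) = substN (\<lambda>Y. if Y \<in> V2 then Es2 Y else \<theta> Y) (rhs_expr (R2 Z))"
      by (rule substN_rhs_expr_cong[OF wf2 right(1)]) (use row2 right disj in auto)
    then show ?thesis
      using s2 right by (simp add: solves_def)
  qed
qed

lemma represents_append:
  assumes r1: "represents Gs1 A1 V1 R1 rs1" and r2: "represents Gs2 A2 V2 R2 rs2"
    and disj: "V1 \<inter> V2 = {}" "V1 \<inter> (\<Union>G\<in>set Gs2. fvN G) = {}" "V2 \<inter> (\<Union>G\<in>set Gs1. fvN G) = {}"
  shows "represents (Gs1 @ Gs2) (A1 \<inter> A2) (V1 \<union> V2)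
    (\<lambda>Z. if Z \<in> V1 then R1 Z else R2 Z) (rs1 @ rs2)"
proof -
  let ?R = "\<lambda>Z. if Z \<in> V1 then R1 Z else R2 Z"
  note wf1 = representsD(3)[OF r1] and wf2 = representsD(3)[OF r2]
  note roots1 = representsD(8)[OF r1] and roots2 = representsD(8)[OF r2]
  have wf: "wf_table (V1 \<union> V2) ?R"
    by (rule wf_table_merge[OF wf1 wf2])
  have rows: "\<forall>Z\<in>V1. set (snd (R1 Z)) \<inter> (V1 \<union> V2) = {}"
    "\<forall>Z\<in>V2. set (snd (R2 Z)) \<inter> (V1 \<union> V2) = {}"
    using represents_rows_disjoint[OF r1 disj(3)] represents_rows_disjoint[OF r2 disj(2)]
    by (simp_all add: Un_commute)
  have "\<exists>w. tau_ranking (V1 \<union> V2) ?R w"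
    using representsD(4)[OF r1] representsD(4)[OF r2] tau_ranking_merge[OF _ _ wf1 wf2 disj(1)]
    by blast
  moreover have "list_all2 (root_of (V1 \<union> V2) ?R) (Gs1 @ Gs2) (rs1 @ rs2)"
  proof (rule list_all2_appendI)
    show "list_all2 (root_of (V1 \<union> V2) ?R) Gs1 rs1"
      using roots1 by (rule list_all2_mono) (rule root_of_embed; use wf1 wf in auto)
    show "list_all2 (root_of (V1 \<union> V2) ?R) Gs2 rs2"
      using roots2 by (rule list_all2_mono) (rule root_of_embed; use wf2 wf disj(1) in auto)
  qed
  moreover have "\<exists>Es. solves (V1 \<union> V2) ?R \<theta> Es \<and>
      list_all2 (\<lambda>G r. Es r = substN \<theta> G) (Gs1 @ Gs2) (rs1 @ rs2)" for \<theta>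
  proof -
    obtain Es1 where s1: "solves V1 R1 \<theta> Es1" "list_all2 (\<lambda>G r. Es1 r = substN \<theta> G) Gs1 rs1"
      using representsD(9)[OF r1] by blast
    obtain Es2 where s2: "solves V2 R2 \<theta> Es2" "list_all2 (\<lambda>G r. Es2 r = substN \<theta> G) Gs2 rs2"
      using representsD(9)[OF r2] by blast
    let ?Es = "\<lambda>Z. if Z \<in> V1 then Es1 Z else Es2 Z"
    have "list_all2 (\<lambda>G r. ?Es r = substN \<theta> G) (Gs1 @ Gs2) (rs1 @ rs2)"
    proof (rule list_all2_appendI)
      show "list_all2 (\<lambda>G r. ?Es r = substN \<theta> G) Gs1 rs1"
        using s1(2) by (rule list.rel_mono_strong) (use roots_subset[OF roots1] in auto)
      show "list_all2 (\<lambda>G r. ?Es r = substN \<theta> G) Gs2 rs2"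
        using s2(2) by (rule list.rel_mono_strong) (use roots_subset[OF roots2] disj(1) in auto)
    qed
    then show ?thesis
      using solves_merge[OF s1(1) s2(1) wf1 wf2 disj(1) rows] by blast
  qed
  moreover have "distinct (rs1 @ rs2)"
    using representsD(2)[OF r1] representsD(2)[OF r2] roots_subset[OF roots1]
      roots_subset[OF roots2] disj(1)
    by auto
  moreover have "(V1 \<union> V2) \<inter> (A1 \<inter> A2 \<union> (\<Union>G\<in>set (Gs1 @ Gs2). fvN G)) = {}"
    using representsD(5,6)[OF r1] representsD(5,6)[OF r2] disj by auto
  moreover have "\<forall>Z\<in>V1 \<union> V2. set (snd (?R Z)) \<subseteq> (\<Union>G\<in>set (Gs1 @ Gs2). fvN G)"
    using representsD(7)[OF r1] representsD(7)[OF r2] by auto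
  ultimately show ?thesis
    using wf representsD(1)[OF r1] representsD(1)[OF r2] by (simp add: represents_def)
qed

text \<open>Solving \<open>rec X. E\<close> replaces every unguarded occurrence of \<open>X\<close>, that is, every variable
  summand \<open>X\<close>, by the right-hand side of the root.\<close>

definition unfold_table :: "('a, 'v) table \<Rightarrow> 'v \<Rightarrow> 'v \<Rightarrow> ('a, 'v) table" where
  "unfold_table R X r = (\<lambda>Z. if X \<in> set (snd (R Z))
     then (fst (R Z) @ fst (R r), filter (\<lambda>v. v \<noteq> X) (snd (R Z)) @ snd (R r)) else R Z)"

lemma unfold_table_summands:
  "l \<in> set (fst (unfold_table R X r Z)) \<Longrightarrow>
    l \<in> set (fst (R Z)) \<or> X \<in> set (snd (R Z)) \<and> l \<in> set (fst (R r))"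
  by (auto simp: unfold_table_def split: if_splits)

lemma wf_table_unfold: "wf_table V R \<Longrightarrow> r \<in> V \<Longrightarrow> wf_table V (unfold_table R X r)"
  unfolding wf_table_def by (blast dest: unfold_table_summands)

text \<open>The additional jump from a state with summand \<open>X\<close> to the root \<open>r\<close> is paid for by a
  hitting bound for \<open>{X}\<close>, which is \<open>1\<close> at the jumping state but below \<open>1\<close> at \<open>r\<close>.\<close>

lemma tau_ranking_unfold:
  assumes wf: "wf_table V R" and w: "tau_ranking V R w" and h: "hit_bound V R {X} h"
    and r: "r \<in> V" "h r < 1"
  shows "tau_ranking V (unfold_table R X r) (\<lambda>Z. w Z + w r / (1 - h r) * h Z)"
proof -
  define c where "c = w r / (1 - h r)"
  have w1: "\<And>Z. Z \<in> V \<Longrightarrow> 1 \<le> w Z" and h01: "\<And>Z. Z \<in> V \<Longrightarrow> 0 \<le> h Z \<and> h Z \<le> 1"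
    and ws: "tau_superharmonic V R 1 w" and hs: "tau_superharmonic V R 0 h"
    using w h by (auto simp: tau_ranking_def hit_bound_def)
  have c0: "0 \<le> c" and c: "w r + c * h r = c"
    using r w1[OF r(1)] by (auto simp: c_def field_simps)
  have "1 + expect ps Xs (\<lambda>Z. w Z + c * h Z) \<le> w Z + c * h Z"
    if Z: "Z \<in> V" and l: "(Tau, ps, Xs) \<in> set (fst (unfold_table R X r Z))" for Z ps Xs
  proof -
    have split: "expect ps Xs (\<lambda>Z. w Z + c * h Z) = expect ps Xs w + c * expect ps Xs h"
      by (simp add: expect_def sum.distrib sum_distrib_left algebra_simps)
    from unfold_table_summands[OF l] show ?thesis
    proof
      assume l': "(Tau, ps, Xs) \<in> set (fst (R Z))"
      have "1 + expect ps Xs w \<le> w Z" "c * expect ps Xs h \<le> c * h Z"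
        using tau_superharmonicD[OF ws Z l'] tau_superharmonicD[OF hs Z l'] c0
        by (auto intro: mult_left_mono)
      then show ?thesis using split by linarith
    next
      assume "X \<in> set (snd (R Z)) \<and> (Tau, ps, Xs) \<in> set (fst (R r))"
      then have hZ: "h Z = 1" and l': "(Tau, ps, Xs) \<in> set (fst (R r))"
        using h Z by (auto simp: hit_bound_def)
      have "1 + expect ps Xs w \<le> w r" "c * expect ps Xs h \<le> c * h r"
        using tau_superharmonicD[OF ws r(1) l'] tau_superharmonicD[OF hs r(1) l'] c0
        by (auto intro: mult_left_mono)
      then have "1 + expect ps Xs (\<lambda>Z. w Z + c * h Z) \<le> w r + c * h r"
        using split by linarith
      then show ?thesis using c hZ w1[OF Z] by simp
    qed
  qed
  moreover have "1 \<le> w Z + c * h Z" if "Z \<in> V" for Z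
    using w1[OF that] h01[OF that] c0 by (simp add: add_increasing2)
  ultimately show ?thesis
    unfolding c_def[symmetric] by (auto simp: tau_ranking_def tau_superharmonic_def)
qed

lemma hit_bound_unfold:
  assumes h: "hit_bound V R (insert X U) h" and r: "r \<in> V"
  shows "hit_bound V (unfold_table R X r) U h"
proof -
  have h01: "\<And>Z. Z \<in> V \<Longrightarrow> 0 \<le> h Z \<and> h Z \<le> 1"
    and h1: "\<And>Z. Z \<in> V \<Longrightarrow> set (snd (R Z)) \<inter> insert X U \<noteq> {} \<Longrightarrow> h Z = 1"
    and hs: "tau_superharmonic V R 0 h"
    using h by (auto simp: hit_bound_def)
  have "expect ps Xs h \<le> h Z"
    if Z: "Z \<in> V" and l: "(Tau, ps, Xs) \<in> set (fst (unfold_table R X r Z))" for Z ps Xs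
    using unfold_table_summands[OF l]
  proof
    assume "(Tau, ps, Xs) \<in> set (fst (R Z))"
    then show ?thesis using tau_superharmonicD[OF hs Z] by simp
  next
    assume "X \<in> set (snd (R Z)) \<and> (Tau, ps, Xs) \<in> set (fst (R r))"
    then show ?thesis
      using tau_superharmonicD[OF hs r] h01[OF r] h1[OF Z] by fastforce
  qed
  moreover have "h Z = 1" if "Z \<in> V" "set (snd (unfold_table R X r Z)) \<inter> U \<noteq> {}" for Z
    using that h1 by (auto simp: unfold_table_def split: if_splits)
  ultimately show ?thesis
    using h01 by (auto simp: hit_bound_def tau_superharmonic_def)
qed

lemma eqN_subst_rhs_unfold:
  assumes wf: "wf_table V R" and Z: "Z \<in> V" and X: "X \<notin> V" "X \<in> set (snd (R Z))"
  shows "eqN (substN (\<sigma>(X := substN \<sigma> (rhs_expr (R r)))) (rhs_expr (R Z)))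
    (substN \<sigma> (rhs_expr (unfold_table R X r Z)))"
proof -
  define B where "B = substN \<sigma> (rhs_expr (R r))"
  define As where "As = map (substN \<sigma> \<circ> summand) (fst (R Z))"
  define ys where "ys = As @ map \<sigma> (filter (\<lambda>v. v \<noteq> X) (snd (R Z)))"
  define bs where "bs = map (substN \<sigma> \<circ> summand) (fst (R r)) @ map \<sigma> (snd (R r))"
  have "map (substN (\<sigma>(X := B)) \<circ> summand) (fst (R Z)) = As"
  proof -
    have "substN (\<sigma>(X := B)) (summand l) = substN \<sigma> (summand l)" if "l \<in> set (fst (R Z))" for l
      using fvN_summand_subset[of V l] wf Z X that by (intro subst_cong) (auto simp: wf_table_def)
    then show ?thesis by (simp add: As_def)
  qed
  then have "substN (\<sigma>(X := B)) (rhs_expr (R Z)) = sumlist (As @ map (\<sigma>(X := B)) (snd (R Z)))"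
    by (simp add: substN_rhs_expr)
  also have "eqN \<dots> (sumlist (ys @ [B]))"
    using X(2) by (intro eqN_sumlist_set) (auto simp: ys_def)
  also have "eqN \<dots> (NSum (sumlist ys) (sumlist bs))"
    using eqN_sym[OF eqN_sumlist_append[of ys "[B]"]] by (simp add: B_def bs_def substN_rhs_expr)
  also have "eqN \<dots> (sumlist (ys @ bs))"
    by (rule eqN_sumlist_append)
  also have "eqN \<dots> (sumlist (map (substN \<sigma> \<circ> summand) (fst (unfold_table R X r Z))
      @ map \<sigma> (snd (unfold_table R X r Z))))"
    using X(2) by (intro eqN_sumlist_set) (auto simp: ys_def bs_def As_def unfold_table_def)
  also have "\<dots> = substN \<sigma> (rhs_expr (unfold_table R X r Z))"
    by (simp add: substN_rhs_expr)
  finally show ?thesis unfolding B_def .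
qed

lemma solves_unfold:
  assumes sol: "solves V R (\<theta>(X := F)) Es" and wf: "wf_table V R" and X: "X \<notin> V"
    and r: "r \<in> V" "X \<notin> set (snd (R r))" and rows: "\<forall>Z\<in>V. set (snd (R Z)) \<inter> V = {}"
    and F: "eqN F (Es r)"
  shows "solves V (unfold_table R X r) \<theta> (Es(r := F))"
proof -
  let ?\<sigma> = "\<lambda>Y. if Y \<in> V then Es Y else (\<theta>(X := F)) Y"
  let ?\<sigma>' = "\<lambda>Y. if Y \<in> V then (Es(r := F)) Y else \<theta> Y"
  have Es: "eqN (Es Z) ((Es(r := F)) Z)" for Z
    using F by (auto intro: eqN_sym eqN_refl)
  have other: "eqN (substN ?\<sigma> (rhs_expr (R Z))) (substN ?\<sigma>' (rhs_expr (R Z)))"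
    if "Z \<in> V" "X \<notin> set (snd (R Z))" for Z
    using that wf rows Es by (intro eqN_subst_rhs_expr_cong) (auto simp: wf_table_def eqN_refl)
  define B where "B = substN ?\<sigma>' (rhs_expr (R r))"
  have "eqN F (Es r)" by (rule F)
  also have "eqN (Es r) (substN ?\<sigma> (rhs_expr (R r)))"
    using sol r by (simp add: solves_def)
  also have "eqN \<dots> B"
    unfolding B_def using r by (rule other)
  finally have FB: "eqN F B" .
  have "eqN ((Es(r := F)) Z) (substN ?\<sigma>' (rhs_expr (unfold_table R X r Z)))" if Z: "Z \<in> V" for Z
  proof -
    have "eqN ((Es(r := F)) Z) (Es Z)" by (rule eqN_sym, rule Es)
    also have "eqN (Es Z) (substN ?\<sigma> (rhs_expr (R Z)))"
      using sol Z by (simp add: solves_def)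
    also have "eqN \<dots> (substN ?\<sigma>' (rhs_expr (unfold_table R X r Z)))"
    proof (cases "X \<in> set (snd (R Z))")
      case True
      have "eqN (substN ?\<sigma> (rhs_expr (R Z))) (substN (?\<sigma>'(X := B)) (rhs_expr (R Z)))"
        using Z wf rows Es X FB by (intro eqN_subst_rhs_expr_cong) (auto simp: wf_table_def eqN_refl)
      also have "eqN \<dots> (substN ?\<sigma>' (rhs_expr (unfold_table R X r Z)))"
        unfolding B_def by (rule eqN_subst_rhs_unfold[OF wf Z X True])
      finally show ?thesis .
    next
      case False
      then show ?thesis using other[OF Z] by (simp add: unfold_table_def)
    qed
    finally show ?thesis .
  qed
  then show ?thesis by (simp add: solves_def)
qed

lemma ugN_nonempty:
  fixes E :: "('a, 'v) nexp" and P :: "('a, 'v) pexp"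
  shows "ugN E V \<Longrightarrow> V \<noteq> {}" and "ugP P V \<Longrightarrow> V \<noteq> {}"
  by (induct rule: ugN_ugP.inducts) auto

lemma unguarded_in_Rec:
  assumes "\<not> ugN E {X}" "unguarded_in E (insert X U)"
  shows "unguarded_in (Rec X E) U"
proof -
  obtain V where V: "V \<subseteq> insert X U" "ugN E V"
    using assms(2) by (auto simp: unguarded_in_def)
  then have "V \<noteq> {X}" using assms(1) by auto
  then have "ugN (Rec X E) (V - {X})"
    using V(2) by (rule ugN_ugP.intros(3)[rotated])
  moreover have "V - {X} \<subseteq> U"
    using V(1) by auto
  ultimately show ?thesis
    unfolding unguarded_in_def by blast
qed

lemma root_of_Rec:
  assumes root: "root_of V R E r" and g: "\<not> ugN E {X}"
  shows "root_of V (unfold_table R X r) (Rec X E) r"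
proof -
  have r: "r \<in> V" and Xr: "X \<notin> set (snd (R r))"
    using root g by (auto simp: root_of_def)
  have "\<exists>h. hit_bound V (unfold_table R X r) U h \<and> h r < 1" if ng: "\<not> unguarded_in (Rec X E) U" for U
  proof -
    have "\<not> unguarded_in E (insert X U)"
      using ng unguarded_in_Rec[OF g] by blast
    then obtain h where "hit_bound V R (insert X U) h" "h r < 1"
      using root unfolding root_of_def by blast
    then show ?thesis
      using hit_bound_unfold[OF _ r] by blast
  qed
  moreover have "ugN (Rec X E) {v}" if "v \<in> set (snd (R r))" for v
    using ugN_ugP.intros(3)[of E "{v}" X] root that Xr by (auto simp: root_of_def)
  ultimately show ?thesis
    using r Xr by (auto simp: root_of_def unfold_table_def)
qed

lemma represents_Rec:
  fixes E :: "('a, 'v) nexp"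
  assumes inf: "infinite (UNIV :: 'v set)"
    and rep: "represents [E] (insert X A) V R [r]" and g: "\<not> ugN E {X}"
  shows "represents [Rec X E] A V (unfold_table R X r) [r]"
proof -
  let ?R = "unfold_table R X r"
  note wf = representsD(3)[OF rep]
  have root: "root_of V R E r"
    using representsD(8)[OF rep] by simp
  have r: "r \<in> V" and Xr: "X \<notin> set (snd (R r))"
    using root g by (auto simp: root_of_def)
  have X: "X \<notin> V" and rows: "\<forall>Z\<in>V. set (snd (R Z)) \<subseteq> fvN E - V"
    using representsD(5,6,7)[OF rep] by auto
  have "\<not> unguarded_in E {X}"
    using g ugN_nonempty(1) by (fastforce simp: unguarded_in_def subset_singleton_iff)
  then obtain h0 where "hit_bound V R {X} h0" "h0 r < 1"
    using root by (auto simp: root_of_def)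
  moreover obtain w where "tau_ranking V R w"
    using representsD(4)[OF rep] by blast
  ultimately have ranking: "\<exists>w. tau_ranking V ?R w"
    using tau_ranking_unfold[OF wf _ _ r] by blast
  have "\<exists>Es. solves V ?R \<theta> Es \<and> Es r = substN \<theta> (Rec X E)" for \<theta>
  proof -
    define F where "F = substN \<theta> (Rec X E)"
    obtain Es where Es: "solves V R (\<theta>(X := F)) Es" "Es r = substN (\<theta>(X := F)) E"
      using representsD(9)[OF rep] by auto
    have "eqN F (Es r)"
      unfolding Es(2) F_def by (rule subst_Rec_unfold[OF inf])
    then have "solves V ?R \<theta> (Es(r := F))"
      using Es(1) wf X r Xr rows by (intro solves_unfold) auto
    then show ?thesis
      unfolding F_def by auto
  qed
  moreover have "\<forall>Z\<in>V. set (snd (?R Z)) \<subseteq> fvN E - {X}"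
    using rows Xr r by (auto simp: unfold_table_def)
  ultimately show ?thesis
    using representsD(1,5,6)[OF rep] wf_table_unfold[OF wf r] ranking root_of_Rec[OF root g]
    by (auto simp: represents_def)
qed

lemma list_all2_in_set1: "list_all2 P xs ys \<Longrightarrow> x \<in> set xs \<Longrightarrow> \<exists>y\<in>set ys. P x y"
  by (induct rule: list_all2_induct) auto

lemma ugP_branches:
  "(\<And>E. E \<in> set (branches P) \<Longrightarrow> unguarded_in E U) \<Longrightarrow> \<exists>V\<subseteq>U. ugP P V"
proof (induct P rule: pexp_induct)
  case (Dirac E)
  then show ?case by (auto simp: unguarded_in_def intro: ugN_ugP.intros)
next
  case (PCh p P Q)
  then obtain V W where "V \<subseteq> U" "ugP P V" "W \<subseteq> U" "ugP Q W" by auto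
  then show ?case by (intro exI[of _ "V \<union> W"]) (auto intro: ugN_ugP.intros)
qed

lemma eqN_subst_Pre_flatten:
  assumes "wfP P" "map \<sigma> rs = map (substN \<theta>) (branches P)"
  shows "eqN (substN \<theta> (Pre \<alpha> P)) (substN \<sigma> (rhs_expr ([(\<alpha>, branch_probs P, rs)], [])))"
proof -
  have "map (\<lambda>Y. Dirac (\<sigma> Y)) rs = map Dirac (map \<sigma> rs)"
    by simp
  also have "\<dots> = map Dirac (map (substN \<theta>) (branches P))"
    by (simp only: assms(2))
  finally have "substN \<sigma> (rhs_expr ([(\<alpha>, branch_probs P, rs)], []))
      = Pre \<alpha> (bigopP (branch_probs P) (map Dirac (map (substN \<theta>) (branches P))))"
    by (simp only: rhs_expr_def fst_conv snd_conv list.map append_Nil2 sumlist.simps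
        substN_summand)
  moreover have "eqN (substN \<theta> (Pre \<alpha> P))
      (Pre \<alpha> (bigopP (branch_probs P) (map Dirac (map (substN \<theta>) (branches P)))))"
    unfolding substN.simps by (intro eqN_eqP.congPre eqP_subst_flatten assms(1))
  ultimately show ?thesis by simp
qed

lemma eqN_subst_rhs_expr_join:
  "eqN (NSum (substN \<sigma> (rhs_expr row1)) (substN \<sigma> (rhs_expr row2)))
    (substN \<sigma> (rhs_expr (fst row1 @ fst row2, snd row1 @ snd row2)))"
proof -
  let ?xs = "\<lambda>row. map (substN \<sigma> \<circ> summand) (fst row)" and ?ys = "\<lambda>row. map \<sigma> (snd row)"
  have "eqN (NSum (sumlist (?xs row1 @ ?ys row1)) (sumlist (?xs row2 @ ?ys row2)))
      (sumlist ((?xs row1 @ ?ys row1) @ (?xs row2 @ ?ys row2)))"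
    by (rule eqN_sumlist_append)
  also have "eqN \<dots> (sumlist ((?xs row1 @ ?xs row2) @ (?ys row1 @ ?ys row2)))"
    by (rule eqN_sumlist_set) auto
  finally show ?thesis by (simp add: substN_rhs_expr)
qed

lemma represents_Pre:
  assumes rep: "represents (branches P) A V R rs" and wfP: "wfP P"
    and X: "X \<notin> V" "X \<notin> A" "X \<notin> fvP P"
  shows "represents [Pre \<alpha> P] A (insert X V) (R(X := ([(\<alpha>, branch_probs P, rs)], []))) [X]"
proof (rule represents_update[OF rep])
  note roots = representsD(8)[OF rep]
  have rsV: "set rs \<subseteq> V" by (rule roots_subset[OF roots])
  have len: "length rs = length (branch_probs P)"
    using list_all2_lengthD[OF roots] by (simp add: length_branch_probs)
  show wf: "\<forall>l\<in>set [(\<alpha>, branch_probs P, rs)]. wf_summand V l"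
    using valid_branch_probs[OF wfP] len representsD(2)[OF rep] rsV by (simp add: wf_summand_def)
  show "\<exists>h. hit_bound V R U h \<and>
      (\<forall>(\<beta>, ps, Xs)\<in>set [(\<alpha>, branch_probs P, rs)]. \<beta> = Tau \<longrightarrow> expect ps Xs h < 1)"
    if ng: "\<not> unguarded_in (Pre \<alpha> P) U" for U
  proof (cases "\<alpha> = Tau")
    case True
    then have "\<not> (\<exists>V\<subseteq>U. ugP P V)"
      using ng by (auto simp: unguarded_in_def intro: ugN_ugP.intros)
    then obtain E where E: "E \<in> set (branches P)" "\<not> unguarded_in E U"
      using ugP_branches by blast
    then obtain r where "r \<in> set rs" "root_of V R E r"
      using list_all2_in_set1[OF roots] by blast
    then obtain h where h: "hit_bound V R U h" "h r < 1" "r \<in> set rs"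
      using E(2) by (auto simp: root_of_def)
    have "expect (branch_probs P) rs h < 1"
      using h rsV len valid_branch_probs[OF wfP]
      by (intro expect_less[of _ _ _ _ r]) (auto simp: hit_bound_def)
    then show ?thesis using h by auto
  next
    case False
    then show ?thesis
      using hit_bound_one[OF representsD(3)[OF rep]] by auto
  qed
  show "eqN (substN \<theta> (Pre \<alpha> P))
      (substN (\<lambda>Y. if Y \<in> V then Es Y else \<theta> Y) (rhs_expr ([(\<alpha>, branch_probs P, rs)], [])))"
    if "list_all2 (\<lambda>G r. Es r = substN \<theta> G) (branches P) rs" for \<theta> Es
  proof (rule eqN_subst_Pre_flatten[OF wfP])
    have "map (\<lambda>Y. if Y \<in> V then Es Y else \<theta> Y) rs = map Es rs"
      using rsV by (intro map_cong) auto
    then show "map (\<lambda>Y. if Y \<in> V then Es Y else \<theta> Y) rs = map (substN \<theta>) (branches P)"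
      using list_all2_roots_map[OF that] by simp
  qed
qed (use X fv_branches[of P] representsD(6)[OF rep] in auto)

lemma represents_NSum:
  assumes rep: "represents [E, F] A V R [r1, r2]"
    and X: "X \<notin> V" "X \<notin> A" "X \<notin> fvN E" "X \<notin> fvN F"
  shows "represents [NSum E F] A (insert X V)
    (R(X := (fst (R r1) @ fst (R r2), snd (R r1) @ snd (R r2)))) [X]"
proof (rule represents_update[OF rep])
  note wf = representsD(3)[OF rep]
  have root1: "root_of V R E r1" and root2: "root_of V R F r2"
    using representsD(8)[OF rep] by auto
  then have r: "r1 \<in> V" "r2 \<in> V" by (auto simp: root_of_def)
  show "\<forall>l\<in>set (fst (R r1) @ fst (R r2)). wf_summand V l"
    using wf r by (auto simp: wf_table_def)
  show "\<forall>v\<in>set (snd (R r1) @ snd (R r2)). v \<in> fvN (NSum E F) \<and> ugN (NSum E F) {v}"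
    using representsD(7)[OF rep] r root1 root2 by (auto simp: root_of_def intro: ugN_ugP.intros)
  show "\<exists>h. hit_bound V R U h \<and>
      (\<forall>(\<alpha>, ps, Xs)\<in>set (fst (R r1) @ fst (R r2)). \<alpha> = Tau \<longrightarrow> expect ps Xs h < 1)"
    if ng: "\<not> unguarded_in (NSum E F) U" for U
  proof -
    have "\<not> unguarded_in E U" "\<not> unguarded_in F U"
      using ng by (auto simp: unguarded_in_def intro: ugN_ugP.intros)
    then obtain h1 h2 where h1: "hit_bound V R U h1" "h1 r1 < 1" and h2: "hit_bound V R U h2" "h2 r2 < 1"
      using root1 root2 unfolding root_of_def by blast
    let ?h = "\<lambda>Z. min (h1 Z) (h2 Z)"
    have h: "hit_bound V R U ?h" by (rule hit_bound_min[OF h1(1) h2(1) wf])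
    have "expect ps Xs ?h < 1" if "(Tau, ps, Xs) \<in> set (fst (R r1)) \<or> (Tau, ps, Xs) \<in> set (fst (R r2))"
      for ps Xs
      using that tau_superharmonicD[of V R 0 ?h] h r h1(2) h2(2)
      by (auto simp: hit_bound_def) fastforce+
    then show ?thesis using h by auto
  qed
  show "eqN (substN \<theta> (NSum E F))
      (substN (\<lambda>Y. if Y \<in> V then Es Y else \<theta> Y) (rhs_expr (fst (R r1) @ fst (R r2), snd (R r1) @ snd (R r2))))"
    if "solves V R \<theta> Es" "list_all2 (\<lambda>G r. Es r = substN \<theta> G) [E, F] [r1, r2]" for \<theta> Es
  proof -
    let ?\<sigma> = "\<lambda>Y. if Y \<in> V then Es Y else \<theta> Y"
    have root_eq: "eqN (Es r) (substN ?\<sigma> (rhs_expr (R r)))" if "r \<in> V" for r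
      using \<open>solves V R \<theta> Es\<close> that by (simp add: solves_def)
    have "eqN (substN \<theta> E) (substN ?\<sigma> (rhs_expr (R r1)))"
      "eqN (substN \<theta> F) (substN ?\<sigma> (rhs_expr (R r2)))"
      using root_eq[OF r(1)] root_eq[OF r(2)] that(2) by simp_all
    then have "eqN (substN \<theta> (NSum E F))
        (NSum (substN ?\<sigma> (rhs_expr (R r1))) (substN ?\<sigma> (rhs_expr (R r2))))"
      by (simp add: eqN_eqP.congSum)
    also have "eqN \<dots> (substN ?\<sigma> (rhs_expr (fst (R r1) @ fst (R r2), snd (R r1) @ snd (R r2))))"
      by (rule eqN_subst_rhs_expr_join)
    finally show ?thesis .
  qed
qed (use X representsD(6)[OF rep] in auto)

lemma represents_NNil: "X \<notin> A \<Longrightarrow> represents [NNil] A {X} (\<lambda>_. ([], [])) [X]"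
  using represents_update[OF represents_Nil, of X A NNil "[]" "[]" "\<lambda>_. ([], [])"]
  by (auto simp: hit_bound_def tau_superharmonic_def rhs_expr_def eqN_refl fun_upd_idem)

lemma represents_NVar: "X \<notin> A \<Longrightarrow> X \<noteq> v \<Longrightarrow> represents [NVar v] A {X} (\<lambda>_. ([], [v])) [X]"
  using represents_update[OF represents_Nil, of X A "NVar v" "[]" "[v]" "\<lambda>_. ([], [v])"]
  by (auto simp: hit_bound_def tau_superharmonic_def rhs_expr_def eqN_refl fun_upd_idem
      ugN_ugP.intros(1))

lemma represents_append_exists:
  fixes Gs1 :: "('a, 'v) nexp list"
  assumes "\<And>A. finite A \<Longrightarrow> \<exists>V R rs. represents Gs1 A V R rs"
    and "\<And>A. finite A \<Longrightarrow> \<exists>V R rs. represents Gs2 A V R rs"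
    and "finite A"
  shows "\<exists>V R rs. represents (Gs1 @ Gs2) A V R rs"
proof -
  obtain V2 R2 rs2 where r2: "represents Gs2 (A \<union> (\<Union>G\<in>set Gs1. fvN G)) V2 R2 rs2"
    using assms(2,3) finite_fv by (metis List.finite_set finite_UN_I finite_Un)
  obtain V1 R1 rs1 where r1: "represents Gs1 (A \<union> V2 \<union> (\<Union>G\<in>set Gs2. fvN G)) V1 R1 rs1"
    using assms(1,3) finite_fv representsD(1)[OF r2] by (metis List.finite_set finite_UN_I finite_Un)
  have "represents (Gs1 @ Gs2) (A \<inter> A) (V1 \<union> V2) (\<lambda>Z. if Z \<in> V1 then R1 Z else R2 Z) (rs1 @ rs2)"
    using representsD(5,6)[OF r1] representsD(5,6)[OF r2]
    by (intro represents_antimono[OF represents_append[OF r1 r2]]) auto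
  then show ?thesis by auto
qed

lemma represents_exists:
  fixes E :: "('a, 'v) nexp" and P :: "('a, 'v) pexp"
  assumes inf: "infinite (UNIV :: 'v set)"
  shows "wfN E \<Longrightarrow> guardedN E \<Longrightarrow> finite A \<Longrightarrow> \<exists>V R r. represents [E] A V R [r]"
    and "wfP P \<Longrightarrow> guardedP P \<Longrightarrow> finite A \<Longrightarrow> \<exists>V R rs. represents (branches P) A V R rs"
proof (induct E and P arbitrary: A and A)
  case NNil
  obtain X where "X \<notin> A" using ex_new_if_finite[OF inf NNil(3)] by blast
  then have "represents [NNil] A {X} (\<lambda>_. ([], [])) [X]" by (rule represents_NNil)
  then show ?case by blast
next
  case (NVar v)
  obtain X where "X \<notin> insert v A" using ex_new_if_finite[OF inf] NVar(3) by blast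
  then have "represents [NVar v] A {X} (\<lambda>_. ([], [v])) [X]" by (intro represents_NVar) auto
  then show ?case by blast
next
  case (Pre \<alpha> P)
  have "\<exists>V R rs. represents (branches P) A V R rs"
    using Pre by simp
  then obtain V R rs where rep: "represents (branches P) A V R rs" by blast
  moreover obtain X where "X \<notin> V \<union> A \<union> fvP P"
    using ex_new_if_finite[OF inf] representsD(1)[OF rep] Pre.prems(3) finite_fv by (metis finite_Un)
  ultimately show ?case using Pre.prems(1) by (auto dest: represents_Pre)
next
  case (Rec X E)
  have "\<exists>V R r. represents [E] (insert X A) V R [r]"
    using Rec.hyps[of "insert X A"] Rec.prems by simp
  then obtain V R r where "represents [E] (insert X A) V R [r]" by blast
  then have "represents [Rec X E] A V (unfold_table R X r) [r]"
    by (rule represents_Rec[OF inf]) (use Rec.prems(2) in simp)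
  then show ?case by blast
next
  case (NSum E F)
  have "\<exists>V R rs. represents ([E] @ [F]) A V R rs"
    using NSum by (intro represents_append_exists) (simp_all, blast+)
  then obtain V R rs where rep0: "represents [E, F] A V R rs"
    by auto
  then have "length rs = 2"
    using list_all2_lengthD[OF representsD(8)[OF rep0]] by simp
  then obtain r1 r2 where "rs = [r1, r2]"
    by (auto simp: length_Suc_conv numeral_2_eq_2)
  with rep0 have rep: "represents [E, F] A V R [r1, r2]"
    by simp
  moreover obtain X where "X \<notin> V \<union> A \<union> fvN E \<union> fvN F"
    using ex_new_if_finite[OF inf] representsD(1)[OF rep] NSum.prems(3) finite_fv by (metis finite_Un)
  ultimately show ?case by (auto dest: represents_NSum)
next
  case (PCh p P Q)
  then show ?case by (auto intro: represents_append_exists)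
qed (simp, blast)

lemma is_eqsys_mk_eqsys: "vs \<noteq> [] \<Longrightarrow> distinct vs \<Longrightarrow> is_eqsys (mk_eqsys vs R)"
  by (simp add: is_eqsys_def mk_eqsys_def comp_def)

lemma standard_mk_eqsys:
  assumes "wf_table (set vs) R" "\<forall>Z\<in>set vs. set (snd (R Z)) \<inter> set vs = {}"
  shows "standard (mk_eqsys vs R)"
  unfolding standard_def standard_rhs_def formal_mk_eqsys
proof (clarify)
  fix Z T assume "(Z, T) \<in> set (mk_eqsys vs R)"
  then have Z: "Z \<in> set vs" and T: "T = rhs_expr (R Z)"
    by (auto simp: mk_eqsys_def)
  show "\<exists>L Vs. T = sumlist (map (\<lambda>(\<alpha>, ps, Xs). Pre \<alpha> (bigop ps (map NVar Xs))) L @ map NVar Vs) \<and>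
      (\<forall>(\<alpha>, ps, Xs)\<in>set L. valid_probs ps \<and> length Xs = length ps \<and> distinct Xs \<and> set Xs \<subseteq> set vs) \<and>
      set Vs \<inter> set vs = {}"
    using assms Z unfolding T rhs_expr_def summand_def
    by (intro exI[of _ "fst (R Z)"] exI[of _ "snd (R Z)"]) (auto simp: wf_table_def wf_summand_def)
qed

lemma sys_vars_mk_eqsys:
  assumes "wf_table (set vs) R"
  shows "sys_vars (mk_eqsys vs R) \<subseteq> (\<Union>Z\<in>set vs. set (snd (R Z)))"
proof
  fix v assume "v \<in> sys_vars (mk_eqsys vs R)"
  then obtain Z where "Z \<in> set vs" "v \<in> fvN (rhs_expr (R Z))" "v \<notin> set vs"
    unfolding sys_vars_def formal_mk_eqsys by (auto simp: mk_eqsys_def)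
  then show "v \<in> (\<Union>Z\<in>set vs. set (snd (R Z)))"
    using fvN_rhs_expr[of "R Z" "set vs"] assms by (auto simp: wf_table_def)
qed

lemma satisfies_mk_eqsys:
  assumes "solves (set vs) R NVar Es" "vs \<noteq> []"
  shows "satisfies (Es (hd vs)) (mk_eqsys vs R)"
  unfolding satisfies_def formal_mk_eqsys
proof (intro exI conjI)
  show "Es (fst (hd (mk_eqsys vs R))) = Es (hd vs)"
    using assms(2) by (simp add: mk_eqsys_def hd_map)
  show "\<forall>(X, T)\<in>set (mk_eqsys vs R).
      eqN (Es X) (substN (\<lambda>Y. if Y \<in> set vs then Es Y else NVar Y) T)"
    using assms(1) by (auto simp: mk_eqsys_def solves_def)
qed

theorem mainTheorem18:
  fixes E :: "('a, 'v) nexp"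
  assumes "infinite (UNIV :: 'v set)"
    and "wfN E"
    and "guardedN E"
  shows "\<exists>S :: ('a, 'v) eqsys. is_eqsys S \<and> standard S \<and> guarded_sys S
            \<and> sys_vars S \<subseteq> fvN E \<and> satisfies E S"
proof -
  obtain V R r where rep: "represents [E] {} V R [r]"
    using represents_exists(1)[OF assms] by blast
  obtain vs where vs: "set vs = V" "distinct vs"
    using finite_distinct_list[OF representsD(1)[OF rep]] by blast
  have "r \<in> V" using representsD(8)[OF rep] by (simp add: root_of_def)
  define vs' where "vs' = r # remove1 r vs"
  have vs': "set vs' = V" "distinct vs'" "vs' \<noteq> []" "hd vs' = r"
    using vs \<open>r \<in> V\<close> by (auto simp: vs'_def)
  obtain Es where Es: "solves V R NVar Es" "Es r = substN NVar E"
    using representsD(9)[OF rep] by auto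
  have wf: "wf_table (set vs') R" and rows: "\<forall>Z\<in>set vs'. set (snd (R Z)) \<subseteq> fvN E - set vs'"
    using representsD(3,6,7)[OF rep] vs'(1) by auto
  obtain w where "tau_ranking (set vs') R w"
    using representsD(4)[OF rep] vs'(1) by auto
  then have "guarded_sys (mk_eqsys vs' R)"
    by (rule guarded_mk_eqsys[OF wf])
  moreover have "standard (mk_eqsys vs' R)"
    using rows by (intro standard_mk_eqsys[OF wf]) auto
  moreover have "sys_vars (mk_eqsys vs' R) \<subseteq> fvN E"
    using sys_vars_mk_eqsys[OF wf] rows by auto
  moreover have "satisfies E (mk_eqsys vs' R)"
    using satisfies_mk_eqsys[of vs' R Es] Es subst_id(1)[of E NVar] vs' by simp
  ultimately show ?thesis
    using is_eqsys_mk_eqsys[OF vs'(3,2)] by blast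
qed

end
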